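(* Let $X$ be a finite connected poset and $K$ a field. If all maximal chains of $X$ lie in a single equivalence class of the relation $\sim$ (i.e. $|\mathcal{C}(X)/{\sim}|=1$), then every Lie automorphism of the incidence algebra $I(X,K)$ is proper.
   Context: $X$ is connected if for any $x,y\in X$ there is a sequence $x=x_0,\dots,x_m=y$ in which consecutive elements are comparable. $\mathrm{Min}(X)$ and $\mathrm{Max}(X)$ denote the sets of minimal and maximal elements of $X$. $\mathcal{C}(X)$ is the set of maximal chains of $X$ (chains maximal under inclusion). Two maximal chains $C,D$ are called linked if there is $x\in C\cap D$ with $x\notin \mathrm{Min}(X)\cup\mathrm{Max}(X)$; $\sim$ is the equivalence relation on $\mathcal{C}(X)$ generated by the linked pairs. The incidence algebra $I(X,K)$ is the $K$-vector space of functions $f:X\times X\to K$ with $f(x,y)=0$ unless $x\le y$, with product $(fg)(x,y)=\sum_{x\le z\le y}f(x,z)g(z,y)$. A Lie automorphism of $I(X,K)$ is a $K$-linear bijection $\varphi$ with $\varphi(ab-ba)=\varphi(a)\varphi(b)-\varphi(b)\varphi(a)$ for all $a,b$. It is proper if $\varphi=\phi+\nu$, where $\phi$ is either an algebra automorphism of $I(X,K)$ or the negative of an algebra anti-automorphism of $I(X,K)$, and $\nu$ is a linear map from $I(X,K)$ to the center of $I(X,K)$ vanishing on all commutators $ab-ba$. *)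

theory Defs
  imports Main
begin

text \<open>The finite poset X is the universe of a type of class finite and order.
  Elements of the incidence algebra are functions f :: X => X => K vanishing off the order.\<close>

definition incidence :: "('a::order \<Rightarrow> 'a \<Rightarrow> 'k::field) set" where
  "incidence = {f. \<forall>x y. \<not> x \<le> y \<longrightarrow> f x y = 0}"

definition inc_mult :: "('a::order \<Rightarrow> 'a \<Rightarrow> 'k::field) \<Rightarrow> ('a \<Rightarrow> 'a \<Rightarrow> 'k) \<Rightarrow> ('a \<Rightarrow> 'a \<Rightarrow> 'k)" where
  "inc_mult f g = (\<lambda>x y. if x \<le> y then (\<Sum>z\<in>{z. x \<le> z \<and> z \<le> y}. f x z * g z y) else 0)"

definition inc_comm :: "('a::order \<Rightarrow> 'a \<Rightarrow> 'k::field) \<Rightarrow> ('a \<Rightarrow> 'a \<Rightarrow> 'k) \<Rightarrow> ('a \<Rightarrow> 'a \<Rightarrow> 'k)" where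
  "inc_comm f g = (\<lambda>x y. inc_mult f g x y - inc_mult g f x y)"

definition inc_center :: "('a::order \<Rightarrow> 'a \<Rightarrow> 'k::field) set" where
  "inc_center = {f \<in> incidence. \<forall>g \<in> incidence. inc_mult f g = inc_mult g f}"

definition inc_linear :: "(('a::order \<Rightarrow> 'a \<Rightarrow> 'k::field) \<Rightarrow> ('a \<Rightarrow> 'a \<Rightarrow> 'k)) \<Rightarrow> bool" where
  "inc_linear \<phi> \<longleftrightarrow>
     (\<forall>f \<in> incidence. \<forall>g \<in> incidence. \<phi> (\<lambda>x y. f x y + g x y) = (\<lambda>x y. \<phi> f x y + \<phi> g x y)) \<and>
     (\<forall>c. \<forall>f \<in> incidence. \<phi> (\<lambda>x y. c * f x y) = (\<lambda>x y. c * \<phi> f x y))"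

definition inc_lin_bij :: "(('a::order \<Rightarrow> 'a \<Rightarrow> 'k::field) \<Rightarrow> ('a \<Rightarrow> 'a \<Rightarrow> 'k)) \<Rightarrow> bool" where
  "inc_lin_bij \<phi> \<longleftrightarrow> inc_linear \<phi> \<and> bij_betw \<phi> incidence incidence"

definition lie_automorphism :: "(('a::order \<Rightarrow> 'a \<Rightarrow> 'k::field) \<Rightarrow> ('a \<Rightarrow> 'a \<Rightarrow> 'k)) \<Rightarrow> bool" where
  "lie_automorphism \<phi> \<longleftrightarrow> inc_lin_bij \<phi> \<and>
     (\<forall>f \<in> incidence. \<forall>g \<in> incidence. \<phi> (inc_comm f g) = inc_comm (\<phi> f) (\<phi> g))"

definition alg_automorphism :: "(('a::order \<Rightarrow> 'a \<Rightarrow> 'k::field) \<Rightarrow> ('a \<Rightarrow> 'a \<Rightarrow> 'k)) \<Rightarrow> bool" where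
  "alg_automorphism \<phi> \<longleftrightarrow> inc_lin_bij \<phi> \<and>
     (\<forall>f \<in> incidence. \<forall>g \<in> incidence. \<phi> (inc_mult f g) = inc_mult (\<phi> f) (\<phi> g))"

definition alg_anti_automorphism :: "(('a::order \<Rightarrow> 'a \<Rightarrow> 'k::field) \<Rightarrow> ('a \<Rightarrow> 'a \<Rightarrow> 'k)) \<Rightarrow> bool" where
  "alg_anti_automorphism \<phi> \<longleftrightarrow> inc_lin_bij \<phi> \<and>
     (\<forall>f \<in> incidence. \<forall>g \<in> incidence. \<phi> (inc_mult f g) = inc_mult (\<phi> g) (\<phi> f))"

definition central_trace :: "(('a::order \<Rightarrow> 'a \<Rightarrow> 'k::field) \<Rightarrow> ('a \<Rightarrow> 'a \<Rightarrow> 'k)) \<Rightarrow> bool" where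
  "central_trace \<nu> \<longleftrightarrow> inc_linear \<nu> \<and> \<nu> ` incidence \<subseteq> inc_center \<and>
     (\<forall>f \<in> incidence. \<forall>g \<in> incidence. \<nu> (inc_comm f g) = (\<lambda>x y. 0))"

definition proper_lie_automorphism :: "(('a::order \<Rightarrow> 'a \<Rightarrow> 'k::field) \<Rightarrow> ('a \<Rightarrow> 'a \<Rightarrow> 'k)) \<Rightarrow> bool" where
  "proper_lie_automorphism \<Phi> \<longleftrightarrow> (\<exists>\<psi> \<nu>. central_trace \<nu> \<and>
     ((alg_automorphism \<psi> \<and> (\<forall>f \<in> incidence. \<Phi> f = (\<lambda>x y. \<psi> f x y + \<nu> f x y))) \<or>
      (alg_anti_automorphism \<psi> \<and> (\<forall>f \<in> incidence. \<Phi> f = (\<lambda>x y. - \<psi> f x y + \<nu> f x y)))))"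

definition poset_connected :: "'a::order itself \<Rightarrow> bool" where
  "poset_connected _ \<longleftrightarrow> (\<forall>x y::'a. (\<lambda>a b. a \<le> b \<or> b \<le> a)\<^sup>*\<^sup>* x y)"

definition is_chain :: "'a::order set \<Rightarrow> bool" where
  "is_chain C \<longleftrightarrow> (\<forall>x\<in>C. \<forall>y\<in>C. x \<le> y \<or> y \<le> x)"

definition max_chain :: "'a::order set \<Rightarrow> bool" where
  "max_chain C \<longleftrightarrow> is_chain C \<and> (\<forall>D. is_chain D \<and> C \<subseteq> D \<longrightarrow> D = C)"

definition min_elems :: "'a::order set" where
  "min_elems = {x. \<forall>y. y \<le> x \<longrightarrow> y = x}"

definition max_elems :: "'a::order set" where
  "max_elems = {x. \<forall>y. x \<le> y \<longrightarrow> y = x}"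

definition chains_linked :: "'a::order set \<Rightarrow> 'a set \<Rightarrow> bool" where
  "chains_linked C D \<longleftrightarrow> (\<exists>x \<in> C \<inter> D. x \<notin> min_elems \<union> max_elems)"

definition chain_equiv :: "'a::order set \<Rightarrow> 'a set \<Rightarrow> bool" where
  "chain_equiv C D \<longleftrightarrow> max_chain C \<and> max_chain D \<and>
     (\<lambda>A B. max_chain A \<and> max_chain B \<and> (chains_linked A B \<or> chains_linked B A))\<^sup>*\<^sup>* C D"

end

(*
  A Lie automorphism phi maps the radical J (the strictly upper triangular part) into
  itself, and after conjugation by a unitriangular element it sends every diagonal matrix unit E_xx
  to a diagonal matrix. Then for x < y the image phi(E_xy) is a common eigenvector of all
  ad phi(E_zz), and the eigenvalues separate strict pairs, so phi(E_xy) = sigma(x,y) E_theta(x,y)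
  for a bijection theta of the strict pairs. Since [E_xy, E_yz] = E_xz, the pairs theta(x,y) and
  theta(y,z) compose either forwards or backwards; this orientation is the same at all inner points
  of a maximal chain, hence everywhere when all maximal chains are ~-equivalent. So theta is
  induced by a monotone or antitone bijection pi of X and sigma is a cocycle up to sign, and
  phi = psi + nu or phi = -psi + nu, where psi f = sigma * (f o pi^-1) is an automorphism or an
  anti-automorphism and nu f = (sum_w lambda_w f(w,w)) * 1 is central and kills commutators.
*)
theory Submission
  imports Defs
begin

section \<open>Matrices over a finite poset\<close>

definition unit_mat :: "'a \<Rightarrow> 'a \<Rightarrow> ('a \<Rightarrow> 'a \<Rightarrow> 'k::field)" where
  "unit_mat a b = (\<lambda>u v. if u = a \<and> v = b then 1 else 0)"

definition kron :: "'a \<Rightarrow> 'a \<Rightarrow> 'k::field" where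
  "kron x y = (if x = y then 1 else 0)"

definition mat_mult :: "('a::finite \<Rightarrow> 'a \<Rightarrow> 'k::field) \<Rightarrow> ('a \<Rightarrow> 'a \<Rightarrow> 'k) \<Rightarrow> ('a \<Rightarrow> 'a \<Rightarrow> 'k)" where
  "mat_mult f g = (\<lambda>x y. \<Sum>z\<in>UNIV. f x z * g z y)"

definition smult_mat :: "'k::field \<Rightarrow> ('a \<Rightarrow> 'a \<Rightarrow> 'k) \<Rightarrow> ('a \<Rightarrow> 'a \<Rightarrow> 'k)" where
  "smult_mat c f = (\<lambda>x y. c * f x y)"

definition diag_mats :: "('a \<Rightarrow> 'a \<Rightarrow> 'k::field) set" where
  "diag_mats = {f. \<forall>x y. x \<noteq> y \<longrightarrow> f x y = 0}"

definition diag_part :: "('a \<Rightarrow> 'a \<Rightarrow> 'k::field) \<Rightarrow> ('a \<Rightarrow> 'a \<Rightarrow> 'k)" where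
  "diag_part f = (\<lambda>x y. if x = y then f x x else 0)"

definition radical :: "('a::order \<Rightarrow> 'a \<Rightarrow> 'k::field) set" where
  "radical = {f \<in> incidence. \<forall>x. f x x = 0}"

lemma incidenceD: "f \<in> incidence \<Longrightarrow> \<not> x \<le> y \<Longrightarrow> f x y = 0"
  by (simp add: incidence_def)

lemma incidence_nonzero_le: "f \<in> incidence \<Longrightarrow> f x y \<noteq> 0 \<Longrightarrow> x \<le> y"
  using incidenceD by blast

lemma unit_mat_incidence: "a \<le> b \<Longrightarrow> unit_mat a b \<in> incidence"
  by (auto simp: incidence_def unit_mat_def)

lemma unit_mat_radical: "a < b \<Longrightarrow> unit_mat a b \<in> radical"
  by (auto simp: radical_def incidence_def unit_mat_def)

lemma unit_mat_diag_mats: "unit_mat a a \<in> diag_mats"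
  by (simp add: unit_mat_def diag_mats_def)

lemma kron_incidence: "kron \<in> incidence"
  by (auto simp: incidence_def kron_def)

lemma diag_mats_incidence: "f \<in> diag_mats \<Longrightarrow> f \<in> incidence"
  by (auto simp: incidence_def diag_mats_def)

lemma diag_part_diag_mats: "diag_part f \<in> diag_mats"
  by (simp add: diag_part_def diag_mats_def)

lemma diag_mats_radical_eq_zero:
  assumes "d \<in> diag_mats" "d \<in> radical"
  shows "d = (\<lambda>x y. 0)"
proof (intro ext)
  fix x y
  show "d x y = 0" using assms by (cases "x = y") (auto simp: diag_mats_def radical_def)
qed

lemma zero_incidence: "(\<lambda>x y. 0) \<in> incidence"
  by (auto simp: incidence_def)

lemma add_incidence: "f \<in> incidence \<Longrightarrow> g \<in> incidence \<Longrightarrow> (\<lambda>x y. f x y + g x y) \<in> incidence"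
  by (auto simp: incidence_def)

lemma diff_incidence: "f \<in> incidence \<Longrightarrow> g \<in> incidence \<Longrightarrow> (\<lambda>x y. f x y - g x y) \<in> incidence"
  by (auto simp: incidence_def)

lemma smult_mat_incidence: "f \<in> incidence \<Longrightarrow> smult_mat c f \<in> incidence"
  by (auto simp: incidence_def smult_mat_def)

lemma sum_incidence: "(\<And>i. i \<in> S \<Longrightarrow> F i \<in> incidence) \<Longrightarrow> (\<lambda>x y. \<Sum>i\<in>S. F i x y) \<in> incidence"
  by (auto simp: incidence_def intro!: sum.neutral)

lemma inc_comm_incidence: "f \<in> incidence \<Longrightarrow> g \<in> incidence \<Longrightarrow> inc_comm f g \<in> incidence"
  by (auto simp: inc_comm_def inc_mult_def incidence_def)

lemma mat_mult_incidence:
  fixes f g :: "'a::{finite,order} \<Rightarrow> 'a \<Rightarrow> 'k::field"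
  assumes "f \<in> incidence" "g \<in> incidence"
  shows "mat_mult f g \<in> incidence"
  unfolding incidence_def mat_mult_def
proof (intro CollectI allI impI sum.neutral ballI)
  fix x y z :: 'a assume "\<not> x \<le> y"
  then have "\<not> x \<le> z \<or> \<not> z \<le> y" using order_trans by blast
  then show "f x z * g z y = 0" using assms by (auto simp: incidenceD)
qed

lemma inc_mult_eq_mat_mult:
  fixes f g :: "'a::{finite,order} \<Rightarrow> 'a \<Rightarrow> 'k::field"
  assumes "f \<in> incidence" "g \<in> incidence"
  shows "inc_mult f g = mat_mult f g"
proof (intro ext)
  fix x y :: 'a
  show "inc_mult f g x y = mat_mult f g x y"
  proof (cases "x \<le> y")
    case True
    have "(\<Sum>z\<in>{z. x \<le> z \<and> z \<le> y}. f x z * g z y) = (\<Sum>z\<in>UNIV. f x z * g z y)"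
      by (rule sum.mono_neutral_left) (use assms in \<open>auto dest: incidence_nonzero_le\<close>)
    then show ?thesis using True by (simp add: inc_mult_def mat_mult_def)
  next
    case False
    then show ?thesis using mat_mult_incidence[OF assms] by (simp add: inc_mult_def incidenceD)
  qed
qed

lemma inc_comm_eq_mat_mult:
  fixes f g :: "'a::{finite,order} \<Rightarrow> 'a \<Rightarrow> 'k::field"
  assumes "f \<in> incidence" "g \<in> incidence"
  shows "inc_comm f g = (\<lambda>x y. mat_mult f g x y - mat_mult g f x y)"
  using assms by (simp add: inc_comm_def inc_mult_eq_mat_mult)

lemma inc_comm_eq_zero_iff:
  fixes f g :: "'a::{finite,order} \<Rightarrow> 'a \<Rightarrow> 'k::field"
  assumes "f \<in> incidence" "g \<in> incidence"
  shows "inc_comm f g = (\<lambda>x y. 0) \<longleftrightarrow> mat_mult f g = mat_mult g f"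
  by (auto simp: inc_comm_eq_mat_mult[OF assms] fun_eq_iff)

lemma mat_mult_assoc: "mat_mult (mat_mult f g) h = mat_mult f (mat_mult g h)"
proof (intro ext)
  fix x y
  have "mat_mult (mat_mult f g) h x y = (\<Sum>w\<in>UNIV. \<Sum>z\<in>UNIV. f x z * g z w * h w y)"
    by (simp add: mat_mult_def sum_distrib_right)
  also have "\<dots> = (\<Sum>z\<in>UNIV. \<Sum>w\<in>UNIV. f x z * g z w * h w y)"
    by (rule sum.swap)
  also have "\<dots> = mat_mult f (mat_mult g h) x y"
    by (simp add: mat_mult_def sum_distrib_left mult.assoc)
  finally show "mat_mult (mat_mult f g) h x y = mat_mult f (mat_mult g h) x y" .
qed

lemma sum_kron_mult: "(\<Sum>w\<in>UNIV. kron x w * f w) = (f x :: 'k::field)"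
  for x :: "'a::finite"
  by (simp add: kron_def if_distrib[of "\<lambda>t. t * _"] cong: if_cong)

lemma sum_mult_kron: "(\<Sum>w\<in>UNIV. f w * kron w x) = (f x :: 'k::field)"
  for x :: "'a::finite"
  by (simp add: kron_def if_distrib[of "\<lambda>t. _ * t"] cong: if_cong)

lemma mat_mult_kron_left [simp]: "mat_mult kron f = f"
  by (simp add: mat_mult_def sum_kron_mult)

lemma mat_mult_kron_right [simp]: "mat_mult f kron = f"
  by (simp add: mat_mult_def sum_mult_kron)

lemma mat_mult_add_left: "mat_mult (\<lambda>x y. f x y + g x y) h = (\<lambda>x y. mat_mult f h x y + mat_mult g h x y)"
  by (simp add: mat_mult_def distrib_right sum.distrib)

lemma mat_mult_add_right: "mat_mult h (\<lambda>x y. f x y + g x y) = (\<lambda>x y. mat_mult h f x y + mat_mult h g x y)"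
  by (simp add: mat_mult_def distrib_left sum.distrib)

lemma mat_mult_diff_left: "mat_mult (\<lambda>x y. f x y - g x y) h = (\<lambda>x y. mat_mult f h x y - mat_mult g h x y)"
  by (simp add: mat_mult_def left_diff_distrib sum_subtractf)

lemma mat_mult_diff_right: "mat_mult h (\<lambda>x y. f x y - g x y) = (\<lambda>x y. mat_mult h f x y - mat_mult h g x y)"
  by (simp add: mat_mult_def right_diff_distrib sum_subtractf)

lemma mat_mult_smult_left: "mat_mult (smult_mat c f) g = smult_mat c (mat_mult f g)"
  by (simp add: mat_mult_def smult_mat_def sum_distrib_left mult.assoc)

lemma mat_mult_smult_right: "mat_mult f (smult_mat c g) = smult_mat c (mat_mult f g)"
  by (simp add: mat_mult_def smult_mat_def sum_distrib_left mult.left_commute)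

lemma mat_mult_sum_left: "mat_mult (\<lambda>x y. \<Sum>i\<in>S. F i x y) g = (\<lambda>x y. \<Sum>i\<in>S. mat_mult (F i) g x y)"
  by (simp add: mat_mult_def sum_distrib_right sum.swap[of _ S])

lemma mat_mult_sum_right: "mat_mult g (\<lambda>x y. \<Sum>i\<in>S. F i x y) = (\<lambda>x y. \<Sum>i\<in>S. mat_mult g (F i) x y)"
  by (simp add: mat_mult_def sum_distrib_left sum.swap[of _ S])

lemma mat_mult_unit_mat_left: "mat_mult (unit_mat a b) f = (\<lambda>x y. if x = a then f b y else 0)"
  by (auto simp: mat_mult_def unit_mat_def if_distrib[of "\<lambda>t. t * _"] cong: if_cong intro!: ext)

lemma mat_mult_unit_mat_right: "mat_mult f (unit_mat a b) = (\<lambda>x y. if y = b then f x a else 0)"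
  by (auto simp: mat_mult_def unit_mat_def if_distrib[of "\<lambda>t. _ * t"] cong: if_cong intro!: ext)

lemma mat_mult_unit_mat: "mat_mult (unit_mat a b) (unit_mat c d) = (if b = c then unit_mat a d else (\<lambda>x y. 0))"
  by (simp add: mat_mult_unit_mat_left) (auto simp: unit_mat_def fun_eq_iff)

lemma mat_mult_diag_left: "d \<in> diag_mats \<Longrightarrow> mat_mult d f u v = d u u * f u v"
  unfolding mat_mult_def diag_mats_def by (subst sum.mono_neutral_right[of UNIV "{u}"]) auto

lemma mat_mult_diag_right: "d \<in> diag_mats \<Longrightarrow> mat_mult f d u v = f u v * d v v"
  unfolding mat_mult_def diag_mats_def by (subst sum.mono_neutral_right[of UNIV "{v}"]) auto

lemma mat_mult_diag_mats_commute:
  assumes "d \<in> diag_mats" "d' \<in> diag_mats"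
  shows "mat_mult d d' = mat_mult d' d"
proof (intro ext)
  fix x y
  show "mat_mult d d' x y = mat_mult d' d x y"
    using assms by (cases "x = y") (simp_all add: mat_mult_diag_left diag_mats_def mult.commute)
qed

lemma mat_mult_incidence_diag:
  fixes f g :: "'a::{finite,order} \<Rightarrow> 'a \<Rightarrow> 'k::field"
  assumes "f \<in> incidence" "g \<in> incidence"
  shows "mat_mult f g x x = f x x * g x x"
  unfolding mat_mult_def
  by (subst sum.mono_neutral_right[of UNIV "{x}"]) (use assms in \<open>auto dest!: incidence_nonzero_le intro: antisym\<close>)

lemma inc_comm_diag_eq_zero:
  fixes f g :: "'a::{finite,order} \<Rightarrow> 'a \<Rightarrow> 'k::field"
  assumes "f \<in> incidence" "g \<in> incidence"
  shows "inc_comm f g x x = 0"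
  using assms by (simp add: inc_comm_eq_mat_mult mat_mult_incidence_diag mult.commute)

lemma commute_unit_mats_diag_mats:
  fixes a :: "'a::finite \<Rightarrow> 'a \<Rightarrow> 'k::field"
  assumes "\<And>x. mat_mult a (unit_mat x x) = mat_mult (unit_mat x x) a"
  shows "a \<in> diag_mats"
  unfolding diag_mats_def
proof (intro CollectI allI impI)
  fix u v :: 'a assume "u \<noteq> v"
  have "mat_mult a (unit_mat u u) u v = mat_mult (unit_mat u u) a u v" using assms by simp
  then show "a u v = 0" using \<open>u \<noteq> v\<close> by (simp add: mat_mult_unit_mat_left mat_mult_unit_mat_right)
qed

lemma inc_comm_unit_mat:
  fixes a b c d :: "'a::{finite,order}"
  assumes "a \<le> b" "c \<le> d"
  shows "inc_comm (unit_mat a b) (unit_mat c d) =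
    (\<lambda>x y. (if b = c then unit_mat a d x y else 0) - (if d = a then unit_mat c b x y else (0::'k::field)))"
  using assms by (simp add: inc_comm_eq_mat_mult unit_mat_incidence mat_mult_unit_mat)

lemma inc_comm_diag_unit_mat:
  fixes x y z :: "'a::{finite,order}"
  assumes "y < z"
  shows "inc_comm (unit_mat x x) (unit_mat y z) = smult_mat (kron y x - kron z x) (unit_mat y z :: 'a \<Rightarrow> 'a \<Rightarrow> 'k::field)"
  unfolding inc_comm_unit_mat[OF order_refl less_imp_le[OF assms]]
  using assms by (auto simp: smult_mat_def kron_def unit_mat_def fun_eq_iff)

lemma inc_comm_smult_mat:
  fixes f g :: "'a::{finite,order} \<Rightarrow> 'a \<Rightarrow> 'k::field"
  assumes "f \<in> incidence" "g \<in> incidence"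
  shows "inc_comm (smult_mat c f) (smult_mat d g) = smult_mat (c * d) (inc_comm f g)"
  using assms
  by (simp add: inc_comm_eq_mat_mult smult_mat_incidence mat_mult_smult_left mat_mult_smult_right)
     (simp add: smult_mat_def algebra_simps)

lemma unit_mat_expansion:
  fixes f :: "'a::finite \<Rightarrow> 'a \<Rightarrow> 'k::field"
  shows "f = (\<lambda>x y. \<Sum>p\<in>UNIV. smult_mat (f (fst p) (snd p)) (unit_mat (fst p) (snd p)) x y)"
proof (intro ext)
  fix x y
  have "(\<Sum>p\<in>UNIV. smult_mat (f (fst p) (snd p)) (unit_mat (fst p) (snd p)) x y)
      = (\<Sum>p\<in>UNIV. if p = (x, y) then f x y else 0)"
    by (rule sum.cong) (auto simp: smult_mat_def unit_mat_def)
  then show "f x y = (\<Sum>p\<in>UNIV. smult_mat (f (fst p) (snd p)) (unit_mat (fst p) (snd p)) x y)"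
    by simp
qed

section \<open>Linear maps and Lie automorphisms\<close>

lemma inc_linear_add:
  "inc_linear \<phi> \<Longrightarrow> f \<in> incidence \<Longrightarrow> g \<in> incidence \<Longrightarrow>
    \<phi> (\<lambda>x y. f x y + g x y) = (\<lambda>x y. \<phi> f x y + \<phi> g x y)"
  by (simp add: inc_linear_def)

lemma inc_linear_smult: "inc_linear \<phi> \<Longrightarrow> f \<in> incidence \<Longrightarrow> \<phi> (smult_mat c f) = smult_mat c (\<phi> f)"
  by (simp add: inc_linear_def smult_mat_def)

lemma inc_linear_zero: "inc_linear \<phi> \<Longrightarrow> \<phi> (\<lambda>x y. 0) = (\<lambda>x y. 0)"
  using inc_linear_smult[of \<phi> "\<lambda>x y. 0" 0] zero_incidence by (simp add: smult_mat_def)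

lemma inc_linear_diff:
  assumes "inc_linear \<phi>" "f \<in> incidence" "g \<in> incidence"
  shows "\<phi> (\<lambda>x y. f x y - g x y) = (\<lambda>x y. \<phi> f x y - \<phi> g x y)"
proof -
  have "(\<lambda>x y. f x y - g x y) = (\<lambda>x y. f x y + smult_mat (-1) g x y)"
    by (simp add: smult_mat_def)
  then show ?thesis
    using assms by (simp add: inc_linear_add inc_linear_smult smult_mat_incidence) (simp add: smult_mat_def)
qed

lemma inc_linear_sum:
  assumes "inc_linear \<phi>" "finite S" "\<And>i. i \<in> S \<Longrightarrow> F i \<in> incidence"
  shows "\<phi> (\<lambda>x y. \<Sum>i\<in>S. F i x y) = (\<lambda>x y. \<Sum>i\<in>S. \<phi> (F i) x y)"
  using assms(2,3)
proof (induction S rule: finite_induct)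
  case empty
  then show ?case by (simp add: inc_linear_zero[OF assms(1)])
next
  case (insert a S)
  then have "\<phi> (\<lambda>x y. F a x y + (\<Sum>i\<in>S. F i x y)) = (\<lambda>x y. \<phi> (F a) x y + \<phi> (\<lambda>x y. \<Sum>i\<in>S. F i x y) x y)"
    by (intro inc_linear_add[OF assms(1)] sum_incidence) auto
  with insert show ?case by simp
qed

lemma inc_linear_comp:
  assumes "inc_linear \<phi>" "\<And>f. f \<in> incidence \<Longrightarrow> \<phi> f \<in> incidence" "inc_linear \<psi>"
  shows "inc_linear (\<lambda>f. \<psi> (\<phi> f))"
  using assms unfolding inc_linear_def by simp

lemma inc_linear_scaled_add:
  assumes "inc_linear \<psi>" "inc_linear \<nu>"
  shows "inc_linear (\<lambda>f x y. s * \<psi> f x y + \<nu> f x y)"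
  using assms unfolding inc_linear_def by (simp add: algebra_simps)

lemma inc_linear_expansion:
  fixes \<phi> :: "('a::{finite,order} \<Rightarrow> 'a \<Rightarrow> 'k::field) \<Rightarrow> _"
  assumes "inc_linear \<phi>" "f \<in> incidence"
  shows "\<phi> f = (\<lambda>x y. \<Sum>p\<in>UNIV. f (fst p) (snd p) * \<phi> (unit_mat (fst p) (snd p)) x y)"
proof -
  have term_eq: "\<phi> (smult_mat (f a b) (unit_mat a b)) = smult_mat (f a b) (\<phi> (unit_mat a b))" for a b
  proof (cases "a \<le> b")
    case True
    then show ?thesis using assms(1) by (simp add: inc_linear_smult unit_mat_incidence)
  next
    case False
    then show ?thesis using assms by (simp add: incidenceD smult_mat_def inc_linear_zero)
  qed
  have term_incidence: "smult_mat (f a b) (unit_mat a b) \<in> incidence" for a b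
  proof (cases "a \<le> b")
    case True
    then show ?thesis by (intro smult_mat_incidence unit_mat_incidence)
  next
    case False
    then show ?thesis using assms(2) by (simp add: incidenceD smult_mat_def zero_incidence)
  qed
  have "\<phi> f = \<phi> (\<lambda>x y. \<Sum>p\<in>UNIV. smult_mat (f (fst p) (snd p)) (unit_mat (fst p) (snd p)) x y)"
    by (subst unit_mat_expansion) (rule refl)
  also have "\<dots> = (\<lambda>x y. \<Sum>p\<in>UNIV. \<phi> (smult_mat (f (fst p) (snd p)) (unit_mat (fst p) (snd p))) x y)"
    by (rule inc_linear_sum[OF assms(1)]) (auto simp: term_incidence)
  finally show ?thesis by (simp only: term_eq) (simp add: smult_mat_def)
qed

lemma inc_linear_eqI:
  fixes \<phi> \<psi> :: "('a::{finite,order} \<Rightarrow> 'a \<Rightarrow> 'k::field) \<Rightarrow> _"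
  assumes "inc_linear \<phi>" "inc_linear \<psi>" "\<And>a b. a \<le> b \<Longrightarrow> \<phi> (unit_mat a b) = \<psi> (unit_mat a b)"
    and "f \<in> incidence"
  shows "\<phi> f = \<psi> f"
proof -
  have term_eq: "f a b * \<phi> (unit_mat a b) x y = f a b * \<psi> (unit_mat a b) x y" for a b x y
    using assms(3)[of a b] incidenceD[OF assms(4), of a b] by (cases "a \<le> b") simp_all
  show ?thesis
    unfolding inc_linear_expansion[OF assms(1,4)] inc_linear_expansion[OF assms(2,4)]
    by (intro ext sum.cong refl) (rule term_eq)
qed

lemma inc_linear_inv_into:
  assumes "inc_linear \<phi>" "bij_betw \<phi> incidence incidence"
  shows "inc_linear (inv_into incidence \<phi>)"
proof -
  let ?i = "inv_into incidence \<phi>"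
  have inv_incidence: "f \<in> incidence \<Longrightarrow> ?i f \<in> incidence" for f
    using bij_betwE[OF bij_betw_inv_into[OF assms(2)]] by blast
  have right_inv: "f \<in> incidence \<Longrightarrow> \<phi> (?i f) = f" for f
    using bij_betw_inv_into_right[OF assms(2)] by blast
  have left_inv: "f \<in> incidence \<Longrightarrow> ?i (\<phi> f) = f" for f
    using bij_betw_inv_into_left[OF assms(2)] by blast
  show ?thesis unfolding inc_linear_def
  proof (intro conjI ballI allI)
    fix f g :: "'a \<Rightarrow> 'a \<Rightarrow> 'b" assume fg: "f \<in> incidence" "g \<in> incidence"
    then have "\<phi> (\<lambda>x y. ?i f x y + ?i g x y) = (\<lambda>x y. f x y + g x y)"
      using inc_linear_add[OF assms(1) inv_incidence inv_incidence] right_inv by simp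
    then show "?i (\<lambda>x y. f x y + g x y) = (\<lambda>x y. ?i f x y + ?i g x y)"
      using left_inv[OF add_incidence[OF inv_incidence[OF fg(1)] inv_incidence[OF fg(2)]]] by simp
  next
    fix c and f :: "'a \<Rightarrow> 'a \<Rightarrow> 'b" assume f: "f \<in> incidence"
    then have "\<phi> (smult_mat c (?i f)) = smult_mat c f"
      using inc_linear_smult[OF assms(1) inv_incidence[OF f]] right_inv by simp
    then have "?i (smult_mat c f) = smult_mat c (?i f)"
      using left_inv[OF smult_mat_incidence[OF inv_incidence[OF f]], of c] by simp
    then show "?i (\<lambda>x y. c * f x y) = (\<lambda>x y. c * ?i f x y)"
      by (simp add: smult_mat_def)
  qed
qed

lemma lie_automorphism_linear: "lie_automorphism \<phi> \<Longrightarrow> inc_linear \<phi>"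
  by (simp add: lie_automorphism_def inc_lin_bij_def)

lemma lie_automorphism_bij: "lie_automorphism \<phi> \<Longrightarrow> bij_betw \<phi> incidence incidence"
  by (simp add: lie_automorphism_def inc_lin_bij_def)

lemma lie_automorphism_incidence: "lie_automorphism \<phi> \<Longrightarrow> f \<in> incidence \<Longrightarrow> \<phi> f \<in> incidence"
  using bij_betwE lie_automorphism_bij by blast

lemma lie_automorphism_inc_comm:
  "lie_automorphism \<phi> \<Longrightarrow> f \<in> incidence \<Longrightarrow> g \<in> incidence \<Longrightarrow>
    \<phi> (inc_comm f g) = inc_comm (\<phi> f) (\<phi> g)"
  by (simp add: lie_automorphism_def)

lemma lie_automorphism_eq_zero_iff:
  assumes "lie_automorphism \<phi>" "f \<in> incidence"
  shows "\<phi> f = (\<lambda>x y. 0) \<longleftrightarrow> f = (\<lambda>x y. 0)"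
proof -
  have zero: "\<phi> (\<lambda>x y. 0) = (\<lambda>x y. 0)"
    using inc_linear_zero[OF lie_automorphism_linear[OF assms(1)]] .
  have "inj_on \<phi> incidence" using bij_betw_imp_inj_on[OF lie_automorphism_bij[OF assms(1)]] .
  then have "\<phi> f = \<phi> (\<lambda>x y. 0) \<longleftrightarrow> f = (\<lambda>x y. 0)"
    using inj_on_eq_iff[OF _ assms(2) zero_incidence] by blast
  then show ?thesis by (simp only: zero)
qed

lemma lie_automorphism_inv_into:
  assumes "lie_automorphism \<phi>"
  shows "lie_automorphism (inv_into incidence \<phi>)"
proof -
  let ?i = "inv_into incidence \<phi>"
  have bij: "bij_betw \<phi> incidence incidence" using lie_automorphism_bij[OF assms] .
  have inv_incidence: "f \<in> incidence \<Longrightarrow> ?i f \<in> incidence" for f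
    using bij_betwE[OF bij_betw_inv_into[OF bij]] by blast
  have "?i (inc_comm f g) = inc_comm (?i f) (?i g)" if "f \<in> incidence" "g \<in> incidence" for f g
  proof -
    have "\<phi> (inc_comm (?i f) (?i g)) = inc_comm f g"
      using lie_automorphism_inc_comm[OF assms inv_incidence inv_incidence] that
        bij_betw_inv_into_right[OF bij] by simp
    then show ?thesis
      using bij_betw_inv_into_left[OF bij inc_comm_incidence[OF inv_incidence[OF that(1)] inv_incidence[OF that(2)]]]
      by simp
  qed
  then show ?thesis
    using inc_linear_inv_into[OF lie_automorphism_linear[OF assms] bij] bij_betw_inv_into[OF bij]
    by (simp add: lie_automorphism_def inc_lin_bij_def)
qed

text \<open>\<open>E\<^sub>a\<^sub>b = [E\<^sub>a\<^sub>a, E\<^sub>a\<^sub>b]\<close> for \<open>a < b\<close>, and commutators vanish on the diagonal.\<close>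
lemma lie_automorphism_radical:
  fixes \<phi> :: "('a::{finite,order} \<Rightarrow> 'a \<Rightarrow> 'k::field) \<Rightarrow> _"
  assumes "lie_automorphism \<phi>" "f \<in> radical"
  shows "\<phi> f \<in> radical"
proof -
  have f: "f \<in> incidence" using assms(2) by (simp add: radical_def)
  have unit_diag: "\<phi> (unit_mat a b) x x = 0" if "a < b" for a b x
  proof -
    have ab: "a \<le> a" "a \<le> b" using that by auto
    have "unit_mat a b = inc_comm (unit_mat a a) (unit_mat a b :: 'a \<Rightarrow> 'a \<Rightarrow> 'k)"
      using that less_imp_neq[OF that] by (simp add: inc_comm_diag_unit_mat kron_def smult_mat_def)
    then have "\<phi> (unit_mat a b) = inc_comm (\<phi> (unit_mat a a)) (\<phi> (unit_mat a b))"
      using lie_automorphism_inc_comm[OF assms(1) unit_mat_incidence[OF ab(1)] unit_mat_incidence[OF ab(2)]]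
      by simp
    then have "\<phi> (unit_mat a b) x x = inc_comm (\<phi> (unit_mat a a)) (\<phi> (unit_mat a b)) x x"
      by (rule arg_cong[where f = "\<lambda>h. h x x"])
    also have "\<dots> = 0"
      using ab by (intro inc_comm_diag_eq_zero lie_automorphism_incidence[OF assms(1)] unit_mat_incidence)
    finally show ?thesis .
  qed
  have term_zero: "f a b * \<phi> (unit_mat a b) x x = 0" for a b x
    using assms(2) unit_diag[of a b x] incidenceD[OF f, of a b]
    by (cases "a < b") (auto simp: radical_def order.order_iff_strict)
  have "\<phi> f x x = 0" for x
    unfolding inc_linear_expansion[OF lie_automorphism_linear[OF assms(1)] f]
    by (intro sum.neutral ballI term_zero)
  then show ?thesis using lie_automorphism_incidence[OF assms(1) f] by (simp add: radical_def)
qed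

section \<open>Unitriangular elements and inner automorphisms\<close>

fun mat_pow :: "('a::finite \<Rightarrow> 'a \<Rightarrow> 'k::field) \<Rightarrow> nat \<Rightarrow> ('a \<Rightarrow> 'a \<Rightarrow> 'k)" where
  "mat_pow n 0 = kron"
| "mat_pow n (Suc k) = mat_mult n (mat_pow n k)"

lemma mat_pow_commute: "mat_mult (mat_pow n k) n = mat_mult n (mat_pow n k)"
  by (induction k) (simp_all add: mat_mult_assoc)

lemma mat_pow_incidence: "n \<in> incidence \<Longrightarrow> mat_pow n k \<in> incidence"
  by (induction k) (simp_all add: kron_incidence mat_mult_incidence)

lemma mat_pow_radical_nonzero:
  fixes n :: "'a::{finite,order} \<Rightarrow> 'a \<Rightarrow> 'k::field"
  assumes "n \<in> radical" "mat_pow n k x y \<noteq> 0"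
  shows "x \<le> y \<and> k < card {x..y}"
  using assms(2)
proof (induction k arbitrary: x)
  case 0
  then have "x = y" by (simp add: kron_def split: if_splits)
  then show ?case by simp
next
  case (Suc k)
  then have "(\<Sum>z\<in>UNIV. n x z * mat_pow n k z y) \<noteq> 0" by (simp add: mat_mult_def)
  then obtain z where "n x z * mat_pow n k z y \<noteq> 0" by (rule sum.not_neutral_contains_not_neutral)
  then have nz: "n x z \<noteq> 0" and pz: "mat_pow n k z y \<noteq> 0" by auto
  have "x \<le> z" "x \<noteq> z" using nz assms(1) by (auto simp: radical_def dest: incidence_nonzero_le)
  then have "x < z" by simp
  moreover from Suc.IH[OF pz] have "z \<le> y" and "k < card {z..y}" by auto
  moreover have "Suc (card {z..y}) \<le> card {x..y}"
  proof -
    have "x \<notin> {z..y}" using \<open>x < z\<close> by auto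
    moreover have "card (insert x {z..y}) \<le> card {x..y}"
      using \<open>x < z\<close> \<open>z \<le> y\<close> by (intro card_mono) auto
    ultimately show ?thesis by simp
  qed
  ultimately show ?case by simp
qed

lemma mat_pow_radical_nilpotent:
  fixes n :: "'a::{finite,order} \<Rightarrow> 'a \<Rightarrow> 'k::field"
  assumes "n \<in> radical"
  shows "mat_pow n (card (UNIV :: 'a set)) = (\<lambda>x y. 0)"
proof (rule ext, rule ext, rule ccontr)
  fix x y
  assume "mat_pow n (card (UNIV :: 'a set)) x y \<noteq> 0"
  then have "card (UNIV :: 'a set) < card {x..y}" using mat_pow_radical_nonzero[OF assms] by blast
  moreover have "card {x..y} \<le> card (UNIV :: 'a set)" by (rule card_mono) auto
  ultimately show False by simp
qed

text \<open>The inverse of \<open>1 - n\<close> is the finite geometric series \<open>\<Sum>k < |X|. n\<^sup>k\<close>.\<close>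
lemma unitriangular_invertible:
  fixes g :: "'a::{finite,order} \<Rightarrow> 'a \<Rightarrow> 'k::field"
  assumes "g \<in> incidence" "\<And>x. g x x = 1"
  obtains h where "h \<in> incidence" "mat_mult g h = kron" "mat_mult h g = kron"
proof
  define n where "n = (\<lambda>x y. kron x y - g x y)"
  have "n \<in> radical"
    using diff_incidence[OF kron_incidence assms(1)] assms(2) by (simp add: n_def radical_def kron_def)
  then have nil: "mat_pow n (card (UNIV :: 'a set)) = (\<lambda>x y. 0)" by (rule mat_pow_radical_nilpotent)
  have g: "g = (\<lambda>x y. kron x y - n x y)" by (simp add: n_def)
  define h where "h = (\<lambda>x y. \<Sum>k<card (UNIV :: 'a set). mat_pow n k x y)"
  have telescope: "(\<lambda>x y. \<Sum>k<card (UNIV :: 'a set). mat_pow n k x y - mat_mult n (mat_pow n k) x y) = kron"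
  proof (intro ext)
    fix x y
    show "(\<Sum>k<card (UNIV :: 'a set). mat_pow n k x y - mat_mult n (mat_pow n k) x y) = kron x y"
      using sum_lessThan_telescope'[of "\<lambda>k. mat_pow n k x y"] nil by simp
  qed
  show "h \<in> incidence"
    unfolding h_def using diff_incidence[OF kron_incidence assms(1)]
    by (intro sum_incidence mat_pow_incidence) (simp add: n_def)
  show "mat_mult g h = kron"
    unfolding g mat_mult_diff_left h_def by (simp add: mat_mult_sum_right sum_subtractf[symmetric] telescope)
  show "mat_mult h g = kron"
    unfolding g mat_mult_diff_right h_def
    by (simp add: mat_mult_sum_left sum_subtractf[symmetric] mat_pow_commute telescope)
qed

definition sandwich :: "('a::finite \<Rightarrow> 'a \<Rightarrow> 'k::field) \<Rightarrow> ('a \<Rightarrow> 'a \<Rightarrow> 'k) \<Rightarrow> ('a \<Rightarrow> 'a \<Rightarrow> 'k) \<Rightarrow> ('a \<Rightarrow> 'a \<Rightarrow> 'k)" where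
  "sandwich g h f = mat_mult (mat_mult g f) h"

locale inverse_pair =
  fixes g h :: "'a::{finite,order} \<Rightarrow> 'a \<Rightarrow> 'k::field"
  assumes g_incidence: "g \<in> incidence" and h_incidence: "h \<in> incidence"
    and right_inverse: "mat_mult g h = kron" and left_inverse: "mat_mult h g = kron"
begin

lemma swap: "inverse_pair h g"
  using g_incidence h_incidence right_inverse left_inverse by unfold_locales

lemma sandwich_incidence: "f \<in> incidence \<Longrightarrow> sandwich g h f \<in> incidence"
  unfolding sandwich_def using mat_mult_incidence g_incidence h_incidence by blast

lemma sandwich_linear: "inc_linear (sandwich g h)"
  unfolding inc_linear_def sandwich_def
  by (simp add: mat_mult_add_left mat_mult_add_right
      mat_mult_smult_left[unfolded smult_mat_def] mat_mult_smult_right[unfolded smult_mat_def])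

lemma sandwich_diff: "sandwich g h (\<lambda>x y. f x y - f' x y) = (\<lambda>x y. sandwich g h f x y - sandwich g h f' x y)"
  unfolding sandwich_def by (simp add: mat_mult_diff_left mat_mult_diff_right)

lemma sandwich_add: "sandwich g h (\<lambda>x y. f x y + f' x y) = (\<lambda>x y. sandwich g h f x y + sandwich g h f' x y)"
  unfolding sandwich_def by (simp add: mat_mult_add_left mat_mult_add_right)

lemma sandwich_mat_mult: "sandwich g h (mat_mult f f') = mat_mult (sandwich g h f) (sandwich g h f')"
proof -
  have "mat_mult (sandwich g h f) (sandwich g h f') = mat_mult (mat_mult g f) (mat_mult (mat_mult h g) (mat_mult f' h))"
    by (simp add: sandwich_def mat_mult_assoc)
  also have "\<dots> = sandwich g h (mat_mult f f')"
    by (simp add: left_inverse sandwich_def mat_mult_assoc)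
  finally show ?thesis by simp
qed

lemma sandwich_sandwich: "sandwich h g (sandwich g h f) = f"
proof -
  have "sandwich h g (sandwich g h f) = mat_mult (mat_mult (mat_mult h g) f) (mat_mult h g)"
    by (simp add: sandwich_def mat_mult_assoc)
  then show ?thesis by (simp add: left_inverse)
qed

lemma sandwich_bij: "bij_betw (sandwich g h) incidence incidence"
  using inverse_pair.sandwich_sandwich[OF swap] inverse_pair.sandwich_incidence[OF swap]
  by (intro bij_betw_byWitness[where f'="sandwich h g"]) (auto simp: sandwich_sandwich sandwich_incidence)

lemma sandwich_inc_comm:
  "f \<in> incidence \<Longrightarrow> f' \<in> incidence \<Longrightarrow> sandwich g h (inc_comm f f') = inc_comm (sandwich g h f) (sandwich g h f')"
  by (simp add: inc_comm_eq_mat_mult sandwich_incidence sandwich_diff sandwich_mat_mult)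

lemma sandwich_center:
  assumes "c \<in> inc_center"
  shows "sandwich g h c = c"
proof -
  have "mat_mult g c = mat_mult c g"
    using assms g_incidence by (auto simp: inc_center_def inc_mult_eq_mat_mult)
  then show ?thesis by (simp add: sandwich_def mat_mult_assoc right_inverse)
qed

lemma inc_lin_bij_sandwich: "inc_lin_bij \<psi> \<Longrightarrow> inc_lin_bij (\<lambda>f. sandwich g h (\<psi> f))"
  using bij_betw_trans[OF _ sandwich_bij, of \<psi>] bij_betwE[of \<psi>]
  by (auto simp: inc_lin_bij_def comp_def intro: inc_linear_comp[OF _ _ sandwich_linear])

lemma lie_automorphism_sandwich:
  assumes "lie_automorphism \<phi>"
  shows "lie_automorphism (\<lambda>f. sandwich g h (\<phi> f))"
  using assms inc_lin_bij_sandwich[of \<phi>] lie_automorphism_incidence[OF assms]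
  by (simp add: lie_automorphism_def sandwich_inc_comm)

lemma alg_automorphism_sandwich:
  assumes "alg_automorphism \<psi>"
  shows "alg_automorphism (\<lambda>f. sandwich g h (\<psi> f))"
proof -
  have lin_bij: "inc_lin_bij \<psi>" using assms by (simp add: alg_automorphism_def)
  then have \<psi>_incidence: "f \<in> incidence \<Longrightarrow> \<psi> f \<in> incidence" for f
    by (auto simp: inc_lin_bij_def dest: bij_betwE)
  show ?thesis
    using assms inc_lin_bij_sandwich[OF lin_bij]
    by (simp add: alg_automorphism_def inc_mult_eq_mat_mult mat_mult_incidence \<psi>_incidence
        sandwich_incidence sandwich_mat_mult)
qed

lemma alg_anti_automorphism_sandwich:
  assumes "alg_anti_automorphism \<psi>"
  shows "alg_anti_automorphism (\<lambda>f. sandwich g h (\<psi> f))"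
proof -
  have lin_bij: "inc_lin_bij \<psi>" using assms by (simp add: alg_anti_automorphism_def)
  then have \<psi>_incidence: "f \<in> incidence \<Longrightarrow> \<psi> f \<in> incidence" for f
    by (auto simp: inc_lin_bij_def dest: bij_betwE)
  show ?thesis
    using assms inc_lin_bij_sandwich[OF lin_bij]
    by (simp add: alg_anti_automorphism_def inc_mult_eq_mat_mult mat_mult_incidence \<psi>_incidence
        sandwich_incidence sandwich_mat_mult)
qed

lemma proper_lie_automorphism_sandwich:
  assumes "proper_lie_automorphism \<Phi>"
  shows "proper_lie_automorphism (\<lambda>f. sandwich g h (\<Phi> f))"
proof -
  obtain \<psi> \<nu> where \<nu>: "central_trace \<nu>" and cases:
    "(alg_automorphism \<psi> \<and> (\<forall>f \<in> incidence. \<Phi> f = (\<lambda>x y. \<psi> f x y + \<nu> f x y))) \<or>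
     (alg_anti_automorphism \<psi> \<and> (\<forall>f \<in> incidence. \<Phi> f = (\<lambda>x y. - \<psi> f x y + \<nu> f x y)))"
    using assms unfolding proper_lie_automorphism_def by blast
  have fixed: "f \<in> incidence \<Longrightarrow> sandwich g h (\<nu> f) = \<nu> f" for f
    using \<nu> sandwich_center by (auto simp: central_trace_def)
  from cases show ?thesis
  proof (elim disjE conjE)
    assume auto: "alg_automorphism \<psi>" and \<Phi>: "\<forall>f \<in> incidence. \<Phi> f = (\<lambda>x y. \<psi> f x y + \<nu> f x y)"
    have "\<forall>f \<in> incidence. sandwich g h (\<Phi> f) = (\<lambda>x y. sandwich g h (\<psi> f) x y + \<nu> f x y)"
      using \<Phi> fixed by (simp add: sandwich_add)
    then show ?thesis
      unfolding proper_lie_automorphism_def using \<nu> alg_automorphism_sandwich[OF auto] by blast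
  next
    assume anti: "alg_anti_automorphism \<psi>" and \<Phi>: "\<forall>f \<in> incidence. \<Phi> f = (\<lambda>x y. - \<psi> f x y + \<nu> f x y)"
    have "\<forall>f \<in> incidence. \<Phi> f = (\<lambda>x y. \<nu> f x y - \<psi> f x y)"
      using \<Phi> by (simp add: algebra_simps)
    then have "\<forall>f \<in> incidence. sandwich g h (\<Phi> f) = (\<lambda>x y. - sandwich g h (\<psi> f) x y + \<nu> f x y)"
      using fixed by (simp add: sandwich_diff)
    then show ?thesis
      unfolding proper_lie_automorphism_def using \<nu> alg_anti_automorphism_sandwich[OF anti] by blast
  qed
qed

end

section \<open>Conjugating a Lie automorphism into one preserving the diagonal\<close>

context
  fixes \<phi> :: "('a::{finite,order} \<Rightarrow> 'a \<Rightarrow> 'k::field) \<Rightarrow> ('a \<Rightarrow> 'a \<Rightarrow> 'k)"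
  assumes lie: "lie_automorphism \<phi>"
begin

private abbreviation \<phi>_inv where "\<phi>_inv \<equiv> inv_into incidence \<phi>"

private lemma linear: "inc_linear \<phi>"
  using lie_automorphism_linear[OF lie] .

private lemma maps_incidence: "f \<in> incidence \<Longrightarrow> \<phi> f \<in> incidence"
  using lie_automorphism_incidence[OF lie] .

private lemma inv_maps_incidence: "f \<in> incidence \<Longrightarrow> \<phi>_inv f \<in> incidence"
  using lie_automorphism_incidence[OF lie_automorphism_inv_into[OF lie]] .

private lemma right_inv: "f \<in> incidence \<Longrightarrow> \<phi> (\<phi>_inv f) = f"
  using bij_betw_inv_into_right[OF lie_automorphism_bij[OF lie]] by blast

private lemma left_inv: "f \<in> incidence \<Longrightarrow> \<phi>_inv (\<phi> f) = f"
  using bij_betw_inv_into_left[OF lie_automorphism_bij[OF lie]] by blast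

lemma lie_automorphism_diag_commute:
  assumes "d \<in> diag_mats" "d' \<in> diag_mats"
  shows "mat_mult (\<phi> d) (\<phi> d') = mat_mult (\<phi> d') (\<phi> d)"
proof -
  have d: "d \<in> incidence" "d' \<in> incidence" using assms diag_mats_incidence by auto
  have "inc_comm d d' = (\<lambda>x y. 0)"
    using inc_comm_eq_zero_iff[OF d] mat_mult_diag_mats_commute[OF assms] by simp
  then have "inc_comm (\<phi> d) (\<phi> d') = (\<lambda>x y. 0)"
    using lie_automorphism_inc_comm[OF lie d] inc_linear_zero[OF linear] by simp
  then show ?thesis using inc_comm_eq_zero_iff[OF maps_incidence[OF d(1)] maps_incidence[OF d(2)]] by simp
qed

text \<open>A preimage of \<open>\<phi>(d\<^sub>1)\<phi>(d\<^sub>2)\<close> commutes with every \<open>E\<^sub>x\<^sub>x\<close>, hence is diagonal.\<close>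
lemma lie_automorphism_diag_mult_closed:
  assumes "d\<^sub>1 \<in> diag_mats" "d\<^sub>2 \<in> diag_mats"
  obtains a where "a \<in> diag_mats" "mat_mult (\<phi> d\<^sub>1) (\<phi> d\<^sub>2) = \<phi> a"
proof
  define c where "c = mat_mult (\<phi> d\<^sub>1) (\<phi> d\<^sub>2)"
  have c: "c \<in> incidence"
    unfolding c_def using assms by (intro mat_mult_incidence maps_incidence diag_mats_incidence)
  have "mat_mult (\<phi>_inv c) (unit_mat x x) = mat_mult (unit_mat x x) (\<phi>_inv c)" for x
  proof -
    have E: "unit_mat x x \<in> incidence" by (simp add: unit_mat_incidence)
    note commute\<^sub>1 = lie_automorphism_diag_commute[OF assms(1) unit_mat_diag_mats[of x]]
    note commute\<^sub>2 = lie_automorphism_diag_commute[OF assms(2) unit_mat_diag_mats[of x]]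
    have "mat_mult c (\<phi> (unit_mat x x)) = mat_mult (\<phi> d\<^sub>1) (mat_mult (\<phi> (unit_mat x x)) (\<phi> d\<^sub>2))"
      by (simp add: c_def mat_mult_assoc commute\<^sub>2)
    also have "\<dots> = mat_mult (\<phi> (unit_mat x x)) c"
      by (simp add: c_def mat_mult_assoc[symmetric] commute\<^sub>1)
    finally have "mat_mult c (\<phi> (unit_mat x x)) = mat_mult (\<phi> (unit_mat x x)) c" .
    then have "inc_comm c (\<phi> (unit_mat x x)) = (\<lambda>x y. 0)"
      using inc_comm_eq_zero_iff[OF c maps_incidence[OF E]] by simp
    then have "\<phi>_inv (inc_comm c (\<phi> (unit_mat x x))) = (\<lambda>x y. 0)"
      using inc_linear_zero[OF lie_automorphism_linear[OF lie_automorphism_inv_into[OF lie]]] by simp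
    then have "inc_comm (\<phi>_inv c) (unit_mat x x) = (\<lambda>x y. 0)"
      using lie_automorphism_inc_comm[OF lie_automorphism_inv_into[OF lie] c maps_incidence[OF E]] left_inv[OF E]
      by simp
    then show ?thesis using inc_comm_eq_zero_iff[OF inv_maps_incidence[OF c] E] by simp
  qed
  then show "\<phi>_inv c \<in> diag_mats" by (rule commute_unit_mats_diag_mats)
  show "mat_mult (\<phi> d\<^sub>1) (\<phi> d\<^sub>2) = \<phi> (\<phi>_inv c)" unfolding c_def using right_inv[OF c] c_def by simp
qed

text \<open>\<open>\<phi>(d - d')\<close> lies in the radical, hence so does \<open>d - d'\<close>.\<close>
lemma lie_automorphism_diag_eqI:
  assumes "d \<in> diag_mats" "d' \<in> diag_mats" "\<And>x. \<phi> d x x = \<phi> d' x x"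
  shows "\<phi> d = \<phi> d'"
proof -
  have d: "d \<in> incidence" "d' \<in> incidence" using assms diag_mats_incidence by auto
  define e where "e = (\<lambda>x y. d x y - d' x y)"
  have e: "e \<in> incidence" unfolding e_def using diff_incidence[OF d] .
  have "\<phi> e = (\<lambda>x y. \<phi> d x y - \<phi> d' x y)" unfolding e_def using inc_linear_diff[OF linear d] .
  then have "\<phi> e \<in> radical" using assms(3) maps_incidence[OF e] by (simp add: radical_def)
  then have "e \<in> radical"
    using lie_automorphism_radical[OF lie_automorphism_inv_into[OF lie]] left_inv[OF e] by fastforce
  moreover have "e \<in> diag_mats" using assms(1,2) by (simp add: e_def diag_mats_def)
  ultimately have "e = (\<lambda>x y. 0)" using diag_mats_radical_eq_zero by blast
  then have "d = d'" by (simp add: e_def fun_eq_iff)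
  then show ?thesis by simp
qed

definition diag_idem :: "'a \<Rightarrow> ('a \<Rightarrow> 'a \<Rightarrow> 'k)" where
  "diag_idem u = \<phi> (diag_part (\<phi>_inv (unit_mat u u)))"

lemma diag_idem_incidence: "diag_idem u \<in> incidence"
  unfolding diag_idem_def by (intro maps_incidence diag_mats_incidence diag_part_diag_mats)

lemma diag_idem_diag: "diag_idem u x x = kron u x"
proof -
  have E: "unit_mat u u \<in> incidence" by (simp add: unit_mat_incidence)
  let ?p = "\<phi>_inv (unit_mat u u)"
  define r where "r = (\<lambda>x y. ?p x y - diag_part ?p x y)"
  have p: "?p \<in> incidence" using inv_maps_incidence[OF E] .
  have dp: "diag_part ?p \<in> incidence" by (intro diag_mats_incidence diag_part_diag_mats)
  have r: "r \<in> radical"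
    using diff_incidence[OF p dp] by (simp add: radical_def r_def diag_part_def)
  have "?p = (\<lambda>x y. diag_part ?p x y + r x y)" by (simp add: r_def)
  then have "\<phi> ?p = \<phi> (\<lambda>x y. diag_part ?p x y + r x y)" by (rule arg_cong)
  also have "\<dots> = (\<lambda>x y. diag_idem u x y + \<phi> r x y)"
    using inc_linear_add[OF linear dp] r by (simp add: diag_idem_def radical_def)
  finally have "unit_mat u u = (\<lambda>x y. diag_idem u x y + \<phi> r x y)" using right_inv[OF E] by simp
  then have "unit_mat u u x x = diag_idem u x x + \<phi> r x x" by simp
  moreover have "\<phi> r x x = 0" using lie_automorphism_radical[OF lie r] by (simp add: radical_def)
  ultimately show ?thesis by (auto simp: unit_mat_def kron_def)
qed

lemma diag_idem_mult: "mat_mult (diag_idem u) (diag_idem v) = (if u = v then diag_idem u else (\<lambda>x y. 0))"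
proof -
  obtain a where a: "a \<in> diag_mats" "mat_mult (diag_idem u) (diag_idem v) = \<phi> a"
    using lie_automorphism_diag_mult_closed[OF diag_part_diag_mats diag_part_diag_mats]
    unfolding diag_idem_def by blast
  define b where "b = (if u = v then diag_part (\<phi>_inv (unit_mat u u)) else (\<lambda>x y. 0))"
  have b: "b \<in> diag_mats" by (simp add: b_def diag_part_diag_mats) (simp add: diag_mats_def)
  have \<phi>_b: "\<phi> b = (if u = v then diag_idem u else (\<lambda>x y. 0))"
    by (simp add: b_def diag_idem_def inc_linear_zero[OF linear])
  have "\<phi> a x x = \<phi> b x x" for x
    using mat_mult_incidence_diag[OF diag_idem_incidence diag_idem_incidence, of u v x] a(2) \<phi>_b
    by (simp add: diag_idem_diag kron_def)
  then have "\<phi> a = \<phi> b" using lie_automorphism_diag_eqI[OF a(1) b] by blast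
  then show ?thesis using a(2) \<phi>_b by simp
qed

lemma diag_image_expansion:
  assumes "d \<in> diag_mats"
  shows "\<phi> d = (\<lambda>x y. \<Sum>u\<in>UNIV. smult_mat (\<phi> d u u) (diag_idem u) x y)"
proof -
  define s where "s = (\<lambda>x y. \<Sum>u\<in>UNIV. smult_mat (\<phi> d u u) (diag_part (\<phi>_inv (unit_mat u u))) x y)"
  have s: "s \<in> diag_mats" unfolding s_def diag_mats_def smult_mat_def diag_part_def by simp
  have "\<phi> s = (\<lambda>x y. \<Sum>u\<in>UNIV. \<phi> (smult_mat (\<phi> d u u) (diag_part (\<phi>_inv (unit_mat u u)))) x y)"
    unfolding s_def
    by (rule inc_linear_sum[OF linear]) (auto intro: smult_mat_incidence diag_mats_incidence diag_part_diag_mats)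
  also have "\<dots> = (\<lambda>x y. \<Sum>u\<in>UNIV. smult_mat (\<phi> d u u) (diag_idem u) x y)"
    by (simp add: inc_linear_smult[OF linear diag_mats_incidence[OF diag_part_diag_mats]] diag_idem_def)
  finally have \<phi>_s: "\<phi> s = \<dots>" .
  have "\<phi> d x x = \<phi> s x x" for x
    by (simp add: \<phi>_s smult_mat_def diag_idem_diag sum_mult_kron)
  then have "\<phi> d = \<phi> s" by (rule lie_automorphism_diag_eqI[OF assms s])
  with \<phi>_s show ?thesis by simp
qed

text \<open>The \<open>diag_idem u\<close> are orthogonal idempotents with \<open>(u,u)\<close> as only nonzero diagonal entry; the
  unitriangular matrix built from their rows conjugates each of them to \<open>E\<^sub>u\<^sub>u\<close>.\<close>
definition diagonalizer :: "'a \<Rightarrow> 'a \<Rightarrow> 'k" where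
  "diagonalizer x y = diag_idem x x y"

lemma diagonalizer_incidence: "diagonalizer \<in> incidence"
  using diag_idem_incidence by (auto simp: diagonalizer_def incidence_def)

lemma diagonalizer_diag: "diagonalizer x x = 1"
  by (simp add: diagonalizer_def diag_idem_diag kron_def)

lemma diagonalizer_intertwines: "mat_mult diagonalizer (diag_idem v) = mat_mult (unit_mat v v) diagonalizer"
proof (intro ext)
  fix x y
  have "mat_mult diagonalizer (diag_idem v) x y = mat_mult (diag_idem x) (diag_idem v) x y"
    by (simp add: mat_mult_def diagonalizer_def)
  also have "\<dots> = mat_mult (unit_mat v v) diagonalizer x y"
    by (simp add: diag_idem_mult mat_mult_unit_mat_left diagonalizer_def)
  finally show "mat_mult diagonalizer (diag_idem v) x y = mat_mult (unit_mat v v) diagonalizer x y" .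
qed

lemma lie_automorphism_conj_diagonal:
  obtains g h where "inverse_pair g h" "\<And>x. sandwich g h (\<phi> (unit_mat x x)) \<in> diag_mats"
proof -
  obtain h where "h \<in> incidence" "mat_mult diagonalizer h = kron" "mat_mult h diagonalizer = kron"
    using unitriangular_invertible[OF diagonalizer_incidence diagonalizer_diag] by blast
  then interpret inverse_pair diagonalizer h
    using diagonalizer_incidence by unfold_locales
  have conj_idem: "sandwich diagonalizer h (diag_idem v) = unit_mat v v" for v
    unfolding sandwich_def diagonalizer_intertwines by (simp add: mat_mult_assoc right_inverse)
  have "sandwich diagonalizer h (\<phi> (unit_mat x x)) =
      sandwich diagonalizer h (\<lambda>a b. \<Sum>u\<in>UNIV. smult_mat (\<phi> (unit_mat x x) u u) (diag_idem u) a b)" for x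
    by (rule arg_cong[OF diag_image_expansion[OF unit_mat_diag_mats]])
  also have "\<dots> x = (\<lambda>a b. \<Sum>u\<in>UNIV. smult_mat (\<phi> (unit_mat x x) u u) (sandwich diagonalizer h (diag_idem u)) a b)" for x
    unfolding sandwich_def
    by (simp add: mat_mult_sum_left mat_mult_sum_right mat_mult_smult_left mat_mult_smult_right)
  finally have "sandwich diagonalizer h (\<phi> (unit_mat x x)) =
      (\<lambda>a b. \<Sum>u\<in>UNIV. smult_mat (\<phi> (unit_mat x x) u u) (unit_mat u u) a b)" for x
    by (simp add: conj_idem)
  then have "sandwich diagonalizer h (\<phi> (unit_mat x x)) \<in> diag_mats" for x
    by (auto simp: diag_mats_def smult_mat_def unit_mat_def intro!: sum.neutral)
  then show ?thesis using inverse_pair_axioms that by blast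
qed

end

section \<open>Lie automorphisms preserving the diagonal\<close>

lemma kron_diff_inj:
  fixes y z y' z' :: "'a::order"
  assumes "y < z" "y' < z'" and eq: "\<And>w. kron y w - kron z w = (kron y' w - kron z' w :: 'k::field)"
  shows "y = y' \<and> z = z'"
proof -
  have "y \<noteq> z" "y' \<noteq> z'" using assms by auto
  have "y = y'"
  proof (rule ccontr)
    assume "y \<noteq> y'"
    then have "y = z'" using eq[of y] \<open>y \<noteq> z\<close> by (auto simp: kron_def split: if_splits)
    moreover have "z = y'" using eq[of z] \<open>y \<noteq> z\<close> \<open>y' \<noteq> z'\<close> calculation by (auto simp: kron_def split: if_splits)
    ultimately show False using assms(1,2) by simp
  qed
  moreover have "z = z'" using eq[of z] \<open>y \<noteq> z\<close> \<open>y' \<noteq> z'\<close> \<open>y = y'\<close> by (auto simp: kron_def split: if_splits)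
  ultimately show ?thesis by simp
qed

locale diag_preserving =
  fixes \<phi> :: "('a::{finite,order} \<Rightarrow> 'a \<Rightarrow> 'k::field) \<Rightarrow> ('a \<Rightarrow> 'a \<Rightarrow> 'k)"
  assumes lie: "lie_automorphism \<phi>"
    and diag: "\<And>x. \<phi> (unit_mat x x) \<in> diag_mats"
begin

definition weight :: "'a \<Rightarrow> 'a \<Rightarrow> 'k" where
  "weight x u = \<phi> (unit_mat x x) u u"

lemma image_diag_unit_mat: "\<phi> (unit_mat x x) u v = (if u = v then weight x u else 0)"
  using diag[of x] by (auto simp: diag_mats_def weight_def)

lemma image_diag_entry:
  assumes f: "f \<in> incidence"
  shows "\<phi> f w w = (\<Sum>x\<in>UNIV. f x x * weight x w)"
proof -
  have "f x y * \<phi> (unit_mat x y) w w = (if y = x then f x x * weight x w else 0)" for x y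
  proof (cases "x < y")
    case True
    then have "\<phi> (unit_mat x y) \<in> radical" by (intro lie_automorphism_radical[OF lie] unit_mat_radical)
    then show ?thesis using True by (auto simp: radical_def)
  next
    case False
    then show ?thesis by (cases "y = x") (auto simp: weight_def incidenceD[OF f] order.order_iff_strict)
  qed
  moreover have "\<phi> f w w = (\<Sum>x\<in>UNIV. \<Sum>y\<in>UNIV. f x y * \<phi> (unit_mat x y) w w)"
    unfolding sum.cartesian_product
    by (simp add: inc_linear_expansion[OF lie_automorphism_linear[OF lie] f] case_prod_beta)
  ultimately show ?thesis by simp
qed

text \<open>The weight matrix is invertible: its inverse is read off \<open>\<phi>\<^sup>-\<^sup>1(E\<^sub>u\<^sub>u)\<close>.\<close>
lemma weight_rows_independent:
  assumes "\<And>x. (\<Sum>w\<in>UNIV. c w * weight x w) = 0"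
  shows "c u = 0"
proof -
  define B where "B x = inv_into incidence \<phi> (unit_mat u u) x x" for x
  have E: "unit_mat u u \<in> incidence" by (simp add: unit_mat_incidence)
  have "unit_mat u u w w = \<phi> (inv_into incidence \<phi> (unit_mat u u)) w w" for w
    using bij_betw_inv_into_right[OF lie_automorphism_bij[OF lie] E] by simp
  also have "\<dots> w = (\<Sum>x\<in>UNIV. B x * weight x w)" for w
    unfolding B_def
    by (rule image_diag_entry[OF lie_automorphism_incidence[OF lie_automorphism_inv_into[OF lie] E]])
  finally have "c u = (\<Sum>w\<in>UNIV. c w * (\<Sum>x\<in>UNIV. B x * weight x w))"
    using sum_mult_kron[of c u] by (simp add: unit_mat_def kron_def)
  also have "\<dots> = (\<Sum>w\<in>UNIV. \<Sum>x\<in>UNIV. B x * (c w * weight x w))"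
    by (simp add: sum_distrib_left mult.left_commute)
  also have "\<dots> = (\<Sum>x\<in>UNIV. \<Sum>w\<in>UNIV. B x * (c w * weight x w))"
    by (rule sum.swap)
  also have "\<dots> = (\<Sum>x\<in>UNIV. B x * (\<Sum>w\<in>UNIV. c w * weight x w))"
    by (simp add: sum_distrib_left)
  also have "\<dots> = 0" using assms by simp
  finally show ?thesis .
qed

lemma weight_inj:
  assumes "\<And>x. weight x u = weight x u'"
  shows "u = u'"
proof (rule ccontr)
  assume "u \<noteq> u'"
  have "(\<Sum>w\<in>UNIV. (kron u w - kron u' w) * weight x w) = 0" for x
    using assms by (simp add: left_diff_distrib sum_subtractf sum_kron_mult)
  then have "kron u u - kron u' u = (0::'k)" by (rule weight_rows_independent)
  then show False using \<open>u \<noteq> u'\<close> by (simp add: kron_def)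
qed

lemma weight_diff_inj:
  assumes "u < v" "u' < v'" "\<And>x. weight x u - weight x v = weight x u' - weight x v'"
  shows "u = u' \<and> v = v'"
proof (rule kron_diff_inj[OF assms(1,2)])
  fix w
  have "(\<Sum>w\<in>UNIV. (kron u w - kron v w - (kron u' w - kron v' w)) * weight x w) = 0" for x
    using assms(3)[of x] by (simp add: left_diff_distrib sum_subtractf sum_kron_mult)
  then have "kron u w - kron v w - (kron u' w - kron v' w) = (0::'k)" by (rule weight_rows_independent)
  then show "kron u w - kron v w = (kron u' w - kron v' w :: 'k)" by simp
qed

lemma image_unit_mat_eigen:
  assumes "y < z"
  shows "(weight x u - weight x v) * \<phi> (unit_mat y z) u v = (kron y x - kron z x) * \<phi> (unit_mat y z) u v"
proof -
  have E: "unit_mat x x \<in> incidence" "unit_mat y z \<in> incidence"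
    using assms by (auto intro: unit_mat_incidence)
  have "(weight x u - weight x v) * \<phi> (unit_mat y z) u v = inc_comm (\<phi> (unit_mat x x)) (\<phi> (unit_mat y z)) u v"
    using inc_comm_eq_mat_mult[OF lie_automorphism_incidence[OF lie E(1)] lie_automorphism_incidence[OF lie E(2)]]
      mat_mult_diag_left[OF diag] mat_mult_diag_right[OF diag]
    by (simp add: weight_def algebra_simps)
  also have "\<dots> = \<phi> (inc_comm (unit_mat x x) (unit_mat y z)) u v"
    by (simp add: lie_automorphism_inc_comm[OF lie E])
  also have "\<dots> = (kron y x - kron z x) * \<phi> (unit_mat y z) u v"
    by (simp only: inc_comm_diag_unit_mat[OF assms] inc_linear_smult[OF lie_automorphism_linear[OF lie] E(2)])
      (simp add: smult_mat_def)
  finally show ?thesis .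
qed

definition supp_pair :: "'a \<Rightarrow> 'a \<Rightarrow> 'a \<times> 'a" where
  "supp_pair y z = (SOME p. \<phi> (unit_mat y z) (fst p) (snd p) \<noteq> 0)"

definition supp_coeff :: "'a \<Rightarrow> 'a \<Rightarrow> 'k" where
  "supp_coeff y z = \<phi> (unit_mat y z) (fst (supp_pair y z)) (snd (supp_pair y z))"

lemma supp_coeff_nonzero:
  assumes "y < z"
  shows "supp_coeff y z \<noteq> 0"
proof -
  have "unit_mat y z \<noteq> (\<lambda>x y. 0::'k)" by (auto simp: unit_mat_def fun_eq_iff)
  then have "\<phi> (unit_mat y z) \<noteq> (\<lambda>x y. 0)"
    using lie_automorphism_eq_zero_iff[OF lie unit_mat_incidence] assms by simp
  then have "\<exists>p. \<phi> (unit_mat y z) (fst p) (snd p) \<noteq> 0" by (auto simp: fun_eq_iff)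
  then show ?thesis unfolding supp_coeff_def supp_pair_def by (rule someI_ex)
qed

lemma image_unit_mat_nonzero_less:
  assumes "y < z" "\<phi> (unit_mat y z) u v \<noteq> 0"
  shows "u < v"
proof -
  have "\<phi> (unit_mat y z) \<in> radical" by (intro lie_automorphism_radical[OF lie] unit_mat_radical assms(1))
  then have "u \<le> v" "u \<noteq> v" using assms(2) by (auto simp: radical_def dest: incidence_nonzero_le)
  then show ?thesis by simp
qed

lemma image_unit_mat_nonzero_weight:
  assumes "y < z" "\<phi> (unit_mat y z) u v \<noteq> 0"
  shows "weight x u - weight x v = kron y x - kron z x"
  using image_unit_mat_eigen[OF assms(1), of x u v] assms(2) by simp

lemma supp_pair_less: "y < z \<Longrightarrow> fst (supp_pair y z) < snd (supp_pair y z)"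
  using image_unit_mat_nonzero_less supp_coeff_nonzero by (simp add: supp_coeff_def)

lemma supp_pair_weight:
  "y < z \<Longrightarrow> weight x (fst (supp_pair y z)) - weight x (snd (supp_pair y z)) = kron y x - kron z x"
  using image_unit_mat_nonzero_weight supp_coeff_nonzero by (simp add: supp_coeff_def)

text \<open>The weights separate strict pairs, so \<open>\<phi>(E\<^sub>y\<^sub>z)\<close> has a single nonzero entry.\<close>
lemma image_unit_mat:
  assumes "y < z"
  shows "\<phi> (unit_mat y z) = smult_mat (supp_coeff y z) (unit_mat (fst (supp_pair y z)) (snd (supp_pair y z)))"
proof (intro ext)
  fix u v
  show "\<phi> (unit_mat y z) u v = smult_mat (supp_coeff y z) (unit_mat (fst (supp_pair y z)) (snd (supp_pair y z))) u v"
  proof (cases "\<phi> (unit_mat y z) u v = 0")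
    case True
    then show ?thesis by (auto simp: smult_mat_def unit_mat_def supp_coeff_def)
  next
    case False
    have "u = fst (supp_pair y z) \<and> v = snd (supp_pair y z)"
      using image_unit_mat_nonzero_less[OF assms False] supp_pair_less[OF assms]
        image_unit_mat_nonzero_weight[OF assms False] supp_pair_weight[OF assms]
      by (intro weight_diff_inj) auto
    then show ?thesis by (auto simp: smult_mat_def unit_mat_def supp_coeff_def)
  qed
qed

lemma supp_pair_inj:
  assumes "y < z" "y' < z'" "supp_pair y z = supp_pair y' z'"
  shows "y = y' \<and> z = z'"
proof (rule kron_diff_inj[OF assms(1,2)])
  fix w
  show "kron y w - kron z w = (kron y' w - kron z' w :: 'k)"
    using supp_pair_weight[OF assms(1), of w] supp_pair_weight[OF assms(2), of w] assms(3) by simp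
qed

lemma supp_pair_surj:
  assumes "u < v"
  obtains y z where "y < z" "supp_pair y z = (u, v)"
proof -
  let ?S = "{p :: 'a \<times> 'a. fst p < snd p}"
  let ?f = "\<lambda>p. supp_pair (fst p) (snd p)"
  have "inj_on ?f ?S"
    using supp_pair_inj by (auto intro!: inj_onI simp: prod_eq_iff)
  moreover have "?f ` ?S \<subseteq> ?S" using supp_pair_less by auto
  ultimately have "?f ` ?S = ?S" by (intro endo_inj_surj) auto
  then have "(u, v) \<in> ?f ` ?S" using assms by simp
  then show ?thesis using that by auto
qed

lemma image_inc_comm_unit_mats:
  assumes "x < y" "z < w"
  shows "\<phi> (inc_comm (unit_mat x y) (unit_mat z w)) =
    smult_mat (supp_coeff x y * supp_coeff z w)
      (inc_comm (unit_mat (fst (supp_pair x y)) (snd (supp_pair x y))) (unit_mat (fst (supp_pair z w)) (snd (supp_pair z w))))"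
  using assms
  by (simp add: lie_automorphism_inc_comm[OF lie] unit_mat_incidence less_imp_le image_unit_mat
      inc_comm_smult_mat supp_pair_less)

text \<open>\<open>[E\<^sub>x\<^sub>y, E\<^sub>y\<^sub>z] = E\<^sub>x\<^sub>z\<close>: the support pairs of \<open>(x,y)\<close> and \<open>(y,z)\<close> compose, in one order or the other.\<close>
lemma supp_pair_compose:
  assumes "x < y" "y < z"
  shows "(snd (supp_pair x y) = fst (supp_pair y z) \<and> supp_pair x z = (fst (supp_pair x y), snd (supp_pair y z)) \<and>
            supp_coeff x z = supp_coeff x y * supp_coeff y z) \<or>
         (snd (supp_pair y z) = fst (supp_pair x y) \<and> supp_pair x z = (fst (supp_pair y z), snd (supp_pair x y)) \<and>
            supp_coeff x z = - (supp_coeff x y * supp_coeff y z))"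
proof -
  obtain a\<^sub>1 b\<^sub>1 a\<^sub>2 b\<^sub>2 a\<^sub>3 b\<^sub>3 where
    p: "supp_pair x y = (a\<^sub>1, b\<^sub>1)" "supp_pair y z = (a\<^sub>2, b\<^sub>2)" "supp_pair x z = (a\<^sub>3, b\<^sub>3)"
    by (metis surj_pair)
  have less: "a\<^sub>1 < b\<^sub>1" "a\<^sub>2 < b\<^sub>2" "a\<^sub>3 < b\<^sub>3"
    using supp_pair_less[OF assms(1)] supp_pair_less[OF assms(2)] supp_pair_less[of x z] assms p by auto
  have "z \<noteq> x" using assms by simp
  then have "inc_comm (unit_mat x y) (unit_mat y z) = (unit_mat x z :: 'a \<Rightarrow> 'a \<Rightarrow> 'k)"
    using assms by (simp add: inc_comm_unit_mat)
  then have "smult_mat (supp_coeff x z) (unit_mat a\<^sub>3 b\<^sub>3) =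
      smult_mat (supp_coeff x y * supp_coeff y z) (inc_comm (unit_mat a\<^sub>1 b\<^sub>1) (unit_mat a\<^sub>2 b\<^sub>2))"
    using image_inc_comm_unit_mats[OF assms] image_unit_mat[of x z] assms p by simp
  then have val: "supp_coeff x z * unit_mat a\<^sub>3 b\<^sub>3 u v = supp_coeff x y * supp_coeff y z *
      ((if b\<^sub>1 = a\<^sub>2 then unit_mat a\<^sub>1 b\<^sub>2 u v else 0) - (if b\<^sub>2 = a\<^sub>1 then unit_mat a\<^sub>2 b\<^sub>1 u v else 0))" for u v
    using less by (simp add: inc_comm_unit_mat smult_mat_def fun_eq_iff)
  have nonzero: "supp_coeff x z \<noteq> 0" using supp_coeff_nonzero assms by simp
  consider "b\<^sub>1 = a\<^sub>2" | "b\<^sub>2 = a\<^sub>1" | "b\<^sub>1 \<noteq> a\<^sub>2" "b\<^sub>2 \<noteq> a\<^sub>1" by blast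
  then show ?thesis
  proof cases
    case 1
    then have "b\<^sub>2 \<noteq> a\<^sub>1" using less by auto
    then show ?thesis using val[of a\<^sub>3 b\<^sub>3] val[of a\<^sub>1 b\<^sub>2] nonzero 1 p by (auto simp: unit_mat_def split: if_splits)
  next
    case 2
    then have "b\<^sub>1 \<noteq> a\<^sub>2" using less by auto
    then show ?thesis using val[of a\<^sub>3 b\<^sub>3] val[of a\<^sub>2 b\<^sub>1] nonzero 2 p by (auto simp: unit_mat_def split: if_splits)
  next
    case 3
    then show ?thesis using val[of a\<^sub>3 b\<^sub>3] nonzero by (simp add: unit_mat_def)
  qed
qed

text \<open>\<open>[E\<^sub>x\<^sub>y, E\<^sub>z\<^sub>w] = 0\<close>, while composable supports would give a nonzero commutator.\<close>
lemma supp_pair_disjoint: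
  assumes "x < y" "z < w" "y \<noteq> z" "w \<noteq> x"
  shows "snd (supp_pair x y) \<noteq> fst (supp_pair z w)"
proof
  assume compose: "snd (supp_pair x y) = fst (supp_pair z w)"
  obtain a\<^sub>1 b\<^sub>1 a\<^sub>2 b\<^sub>2 where p: "supp_pair x y = (a\<^sub>1, b\<^sub>1)" "supp_pair z w = (a\<^sub>2, b\<^sub>2)"
    by (metis surj_pair)
  have less: "a\<^sub>1 < b\<^sub>1" "a\<^sub>2 < b\<^sub>2" using supp_pair_less assms p by (metis fst_conv snd_conv)+
  have "b\<^sub>1 = a\<^sub>2" "b\<^sub>2 \<noteq> a\<^sub>1" using compose p less by auto
  have "inc_comm (unit_mat x y) (unit_mat z w) = (\<lambda>u v. 0 :: 'k)"
    using assms by (simp add: inc_comm_unit_mat)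
  then have "(\<lambda>u v. 0) = smult_mat (supp_coeff x y * supp_coeff z w) (inc_comm (unit_mat a\<^sub>1 b\<^sub>1) (unit_mat a\<^sub>2 b\<^sub>2))"
    using image_inc_comm_unit_mats[OF assms(1,2)] inc_linear_zero[OF lie_automorphism_linear[OF lie]] p by simp
  then have "supp_coeff x y * supp_coeff z w * inc_comm (unit_mat a\<^sub>1 b\<^sub>1) (unit_mat a\<^sub>2 b\<^sub>2) a\<^sub>1 b\<^sub>2 = 0"
    by (auto simp: smult_mat_def fun_eq_iff)
  moreover have "inc_comm (unit_mat a\<^sub>1 b\<^sub>1) (unit_mat a\<^sub>2 b\<^sub>2) a\<^sub>1 b\<^sub>2 = (1::'k)"
    unfolding inc_comm_unit_mat[OF less_imp_le[OF less(1)] less_imp_le[OF less(2)]]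
    using \<open>b\<^sub>1 = a\<^sub>2\<close> \<open>b\<^sub>2 \<noteq> a\<^sub>1\<close> by (simp add: unit_mat_def)
  ultimately show False using supp_coeff_nonzero assms(1,2) by simp
qed

end

section \<open>Maximal chains\<close>

definition inner :: "'a::order \<Rightarrow> bool" where
  "inner m \<longleftrightarrow> (\<exists>c. c < m) \<and> (\<exists>z. m < z)"

lemma not_min_max_iff_inner: "m \<notin> min_elems \<union> max_elems \<longleftrightarrow> inner m"
  by (auto simp: inner_def min_elems_def max_elems_def order.order_iff_strict)

lemma inner_between: "x < m \<Longrightarrow> m < z \<Longrightarrow> inner m"
  by (auto simp: inner_def)

lemma max_chain_comparable: "max_chain C \<Longrightarrow> a \<in> C \<Longrightarrow> b \<in> C \<Longrightarrow> a \<le> b \<or> b \<le> a"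
  by (simp add: max_chain_def is_chain_def)

lemma is_chain_extends_to_max_chain:
  fixes S :: "'a::{finite,order} set"
  assumes "is_chain S"
  obtains C where "max_chain C" "S \<subseteq> C"
  using assms
proof (induction "card (UNIV::'a set) - card S" arbitrary: S rule: less_induct)
  case less
  show ?case
  proof (cases "max_chain S")
    case True
    then show ?thesis using less.prems(1) by blast
  next
    case False
    then obtain D where D: "is_chain D" "S \<subset> D" using less.prems(2) by (auto simp: max_chain_def)
    then have "card S < card D" by (simp add: psubset_card_mono)
    moreover have "card D \<le> card (UNIV :: 'a set)" by (simp add: card_mono)
    ultimately show ?thesis using less.hyps[OF _ _ D(1)] less.prems(1) D(2) by (meson diff_less_mono2 less_le_trans psubset_imp_subset subset_trans)
  qed
qed

lemma max_chain_through_inner: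
  fixes m :: "'a::{finite,order}"
  assumes "inner m"
  obtains C where "max_chain C" "m \<in> C"
proof -
  obtain c z where "c < m" "m < z" using assms by (auto simp: inner_def)
  then have "is_chain {c, m, z}" by (auto simp: is_chain_def)
  then show ?thesis using that is_chain_extends_to_max_chain by blast
qed

lemma max_chain_pair:
  fixes x y :: "'a::order"
  assumes "x < y" "\<not> inner x" "\<not> inner y" "\<not> (\<exists>r. x < r \<and> r < y)"
  shows "max_chain {x, y}"
  unfolding max_chain_def
proof (intro conjI allI impI)
  show "is_chain {x, y}" using assms(1) by (auto simp: is_chain_def)
  fix D assume D: "is_chain D \<and> {x, y} \<subseteq> D"
  have "d \<in> {x, y}" if "d \<in> D" for d
  proof (rule ccontr)
    assume "d \<notin> {x, y}"
    moreover have "d \<le> x \<or> x \<le> d" "d \<le> y \<or> y \<le> d" using D that by (auto simp: is_chain_def)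
    ultimately have "d < x \<or> x < d" "d < y \<or> y < d" by auto
    then show False
    proof (elim disjE)
      assume "d < x" "d < y" then show False using assms(1,2) by (auto simp: inner_def)
    next
      assume "d < x" "y < d" then show False using assms(1) by simp
    next
      assume "x < d" "d < y" then show False using assms(4) by blast
    next
      assume "x < d" "y < d" then show False using assms(1,3) by (auto simp: inner_def)
    qed
  qed
  then show "D = {x, y}" using D by blast
qed

context
  assumes single: "\<forall>C D :: 'a::{finite,order} set. max_chain C \<and> max_chain D \<longrightarrow> chain_equiv C D"
begin

text \<open>Linked maximal chains share an inner element, and inner elements of one chain are comparable.\<close>
lemma inner_const:
  fixes f :: "'a \<Rightarrow> 'b"
  assumes comparable: "\<And>m m'. inner m \<Longrightarrow> inner m' \<Longrightarrow> m < m' \<Longrightarrow> f m = f m'"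
    and "inner m" "inner m'"
  shows "f m = f m'"
proof -
  have chain_const: "f n = f n'" if "max_chain D" "n \<in> D" "n' \<in> D" "inner n" "inner n'" for D n n'
  proof (cases "n = n'")
    case False
    then have "n < n' \<or> n' < n" using max_chain_comparable[OF that(1-3)] by (auto simp: order.order_iff_strict)
    then show ?thesis
    proof
      assume "n < n'"
      then show ?thesis by (rule comparable[OF that(4,5)])
    next
      assume "n' < n"
      then show ?thesis using comparable[OF that(5,4)] by simp
    qed
  qed simp
  obtain C where C: "max_chain C" "m \<in> C" using max_chain_through_inner[OF assms(2)] .
  obtain C' where C': "max_chain C'" "m' \<in> C'" using max_chain_through_inner[OF assms(3)] .
  have "(\<lambda>A B. max_chain A \<and> max_chain B \<and> (chains_linked A B \<or> chains_linked B A))\<^sup>*\<^sup>* C C'"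
    using single C(1) C'(1) by (simp add: chain_equiv_def)
  then have "max_chain C' \<and> (\<forall>n\<in>C'. inner n \<longrightarrow> f n = f m)"
  proof (induction rule: rtranclp_induct)
    case base
    show ?case using C chain_const[OF C(1) _ C(2) _ assms(2)] by blast
  next
    case (step D D')
    then obtain n where n: "n \<in> D" "n \<in> D'" "inner n"
      using not_min_max_iff_inner by (auto simp: chains_linked_def)
    have "f n = f m" using step.IH n(1,3) by blast
    moreover have "max_chain D'" using step.hyps(2) by blast
    ultimately show ?case using chain_const[OF _ _ n(2) _ n(3)] by auto
  qed
  then have "f m' = f m" using C'(2) assms(3) by blast
  then show ?thesis by simp
qed

lemma max_chain_without_inner_unique:
  fixes C D :: "'a set"
  assumes "max_chain C" "\<forall>x\<in>C. \<not> inner x" "max_chain D"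
  shows "D = C"
proof -
  have "(\<lambda>A B. max_chain A \<and> max_chain B \<and> (chains_linked A B \<or> chains_linked B A))\<^sup>*\<^sup>* C D"
    using single assms(1,3) by (simp add: chain_equiv_def)
  then show ?thesis
  proof (cases rule: converse_rtranclpE)
    case (step C\<^sub>1)
    then show ?thesis using assms(2) not_min_max_iff_inner by (auto simp: chains_linked_def)
  qed simp
qed

lemma strict_pair_near_inner:
  fixes m x y :: 'a
  assumes "inner m" "x < y"
  shows "inner x \<or> inner y \<or> (\<exists>r. x < r \<and> r < y)"
proof (rule ccontr)
  assume "\<not> ?thesis"
  then have pair: "max_chain {x, y}" "\<forall>u\<in>{x, y}. \<not> inner u"
    using max_chain_pair[OF assms(2)] by auto
  obtain C where "max_chain C" "m \<in> C" using max_chain_through_inner[OF assms(1)] .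
  then show False using max_chain_without_inner_unique[OF pair] assms(1) pair(2) by blast
qed

lemma strict_pair_unique_without_inner:
  fixes x y x' y' :: 'a
  assumes "\<forall>m::'a. \<not> inner m" "x < y" "x' < y'"
  shows "x = x' \<and> y = y'"
proof -
  have no_between: "\<not> (\<exists>r. a < r \<and> r < b)" for a b :: 'a
    using assms(1) inner_between by blast
  have pairs: "max_chain {x, y}" "max_chain {x', y'}"
    using max_chain_pair[OF assms(2)] max_chain_pair[OF assms(3)] assms(1) no_between by auto
  then have "{x', y'} = {x, y}" using max_chain_without_inner_unique assms(1) by blast
  then show ?thesis using assms(2,3) by (metis doubleton_eq_iff order.asym)
qed

end

lemma connected_const:
  fixes g :: "'a::order \<Rightarrow> 'b"
  assumes "poset_connected TYPE('a)" and "\<And>x y. x < y \<Longrightarrow> g x = g y"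
  shows "g p = g q"
proof -
  have "(\<lambda>a b. a \<le> b \<or> b \<le> a)\<^sup>*\<^sup>* p q" using assms(1) by (simp add: poset_connected_def)
  then show ?thesis
  proof (induction rule: rtranclp_induct)
    case (step y z)
    have "g y = g z"
    proof (cases "y = z")
      case False
      then have "y < z \<or> z < y" using step.hyps(2) by (auto simp: order.order_iff_strict)
      then show ?thesis using assms(2)[of y z] assms(2)[of z y] by auto
    qed simp
    then show ?case using step.IH by simp
  qed simp
qed

lemma connected_isolated:
  fixes p :: "'a::order"
  assumes "poset_connected TYPE('a)" and "\<And>q. \<not> (q < p \<or> p < q)"
  shows "q = p"
  using connected_const[OF assms(1), of "\<lambda>x. x = p"] assms(2) by blast

lemma connected_affine:
  fixes h :: "'a::order \<Rightarrow> 'k::field"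
  assumes "poset_connected TYPE('a)"
    and "\<And>x y. x < y \<Longrightarrow> h x - h y = s * (kron x w - kron y w)"
  shows "h p = (h w - s) + s * kron p w"
proof -
  have "h x - s * kron x w = h y - s * kron y w" if "x < y" for x y
    using assms(2)[OF that] by algebra
  then have "h p - s * kron p w = h w - s * kron w w"
    by (rule connected_const[OF assms(1), of "\<lambda>p. h p - s * kron p w"])
  then show ?thesis by (simp add: kron_def algebra_simps)
qed

section \<open>Strict pair maps induced by a relabelling\<close>

text \<open>The abstract properties of the support map \<open>(x, y) \<mapsto> supp_pair x y\<close> of a
  diagonal-preserving Lie automorphism, with weights \<open>wt w u\<close>.\<close>
locale strict_pair_map =
  fixes T :: "'a::{finite,order} \<Rightarrow> 'a \<Rightarrow> 'a \<times> 'a" and wt :: "'a \<Rightarrow> 'a \<Rightarrow> 'k::field"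
  assumes connected: "poset_connected TYPE('a)"
    and single: "\<forall>C D :: 'a set. max_chain C \<and> max_chain D \<longrightarrow> chain_equiv C D"
    and less: "\<And>x y. x < y \<Longrightarrow> fst (T x y) < snd (T x y)"
    and compose: "\<And>x y z. x < y \<Longrightarrow> y < z \<Longrightarrow>
      (snd (T x y) = fst (T y z) \<and> T x z = (fst (T x y), snd (T y z))) \<or>
      (snd (T y z) = fst (T x y) \<and> T x z = (fst (T y z), snd (T x y)))"
    and disjoint: "\<And>x y z w. x < y \<Longrightarrow> z < w \<Longrightarrow> y \<noteq> z \<Longrightarrow> w \<noteq> x \<Longrightarrow> snd (T x y) \<noteq> fst (T z w)"
    and weight_diff: "\<And>x y w. x < y \<Longrightarrow> wt w (fst (T x y)) - wt w (snd (T x y)) = kron x w - kron y w"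
    and weight_inj: "\<And>u u'. (\<And>w. wt w u = wt w u') \<Longrightarrow> u = u'"
begin

definition forward :: "'a \<Rightarrow> 'a \<Rightarrow> 'a \<Rightarrow> bool" where
  "forward x y z \<longleftrightarrow> snd (T x y) = fst (T y z)"

lemma forward_compose:
  assumes "x < y" "y < z" "forward x y z"
  shows "T x z = (fst (T x y), snd (T y z))"
proof -
  have "fst (T x y) < snd (T y z)"
    using less[OF assms(1)] less[OF assms(2)] assms(3) by (simp add: forward_def)
  then show ?thesis using compose[OF assms(1,2)] by auto
qed

lemma backward_compose:
  assumes "x < y" "y < z" "\<not> forward x y z"
  shows "snd (T y z) = fst (T x y)" "T x z = (fst (T y z), snd (T x y))"
  using compose[OF assms(1,2)] assms(3) by (auto simp: forward_def)

lemma forward_change_right: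
  assumes "x < y" "y < z" "y < z'" "forward x y z"
  shows "forward x y z'"
proof (rule ccontr)
  assume "\<not> forward x y z'"
  then have "snd (T y z') = fst (T x z)"
    using backward_compose(1)[OF assms(1,3)] forward_compose[OF assms(1,2,4)] by simp
  moreover have "snd (T y z') \<noteq> fst (T x z)"
    using assms by (intro disjoint) auto
  ultimately show False by simp
qed

lemma forward_change_left:
  assumes "x < y" "x' < y" "y < z" "forward x y z"
  shows "forward x' y z"
proof (rule ccontr)
  assume "\<not> forward x' y z"
  then have "snd (T x y) = fst (T x' z)"
    using backward_compose(2)[OF assms(2,3)] assms(4) by (simp add: forward_def)
  moreover have "snd (T x y) \<noteq> fst (T x' z)"
    using assms by (intro disjoint) auto
  ultimately show False by simp
qed

lemma forward_indep:
  assumes "x < y" "x' < y" "y < z" "y < z'"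
  shows "forward x y z \<longleftrightarrow> forward x' y z'"
  using assms forward_change_left forward_change_right by meson

lemma forward_shift_right:
  assumes "x < y" "y < z" "z < w" "forward x y z"
  shows "forward y z w"
proof (rule ccontr)
  assume backward: "\<not> forward y z w"
  have xz: "T x z = (fst (T x y), snd (T y z))" using forward_compose[OF assms(1,2,4)] .
  have zw: "snd (T z w) = fst (T y z)" using backward_compose(1)[OF assms(2,3) backward] .
  have "x < z" using assms(1,2) by simp
  from compose[OF this assms(3)] show False
  proof (elim disjE conjE)
    assume "snd (T x z) = fst (T z w)"
    then show False using xz zw less[OF assms(2)] less[OF assms(3)] by simp
  next
    assume "snd (T z w) = fst (T x z)"
    then show False using xz zw less[OF assms(1)] assms(4) by (simp add: forward_def)
  qed
qed

lemma forward_shift_left: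
  assumes "x < y" "y < z" "z < w" "forward y z w"
  shows "forward x y z"
proof (rule ccontr)
  assume backward: "\<not> forward x y z"
  note yx = backward_compose[OF assms(1,2) backward]
  have "x < z" using assms(1,2) by simp
  from compose[OF this assms(3)] show False
  proof (elim disjE conjE)
    assume "snd (T x z) = fst (T z w)"
    then show False using yx less[OF assms(1)] assms(4) by (simp add: forward_def)
  next
    assume "snd (T z w) = fst (T x z)"
    then show False using yx less[OF assms(2)] less[OF assms(3)] assms(4) by (simp add: forward_def)
  qed
qed

definition forward_at :: "'a \<Rightarrow> bool" where
  "forward_at m = forward (SOME c. c < m) m (SOME z. m < z)"

lemma forward_at_eq:
  assumes "c < m" "m < z"
  shows "forward_at m \<longleftrightarrow> forward c m z"
proof -
  have "(SOME c. c < m) < m" "m < (SOME z. m < z)" using assms by (auto intro: someI)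
  then show ?thesis unfolding forward_at_def by (rule forward_indep[OF _ assms(1) _ assms(2)])
qed

text \<open>\<open>forward_at\<close> agrees on comparable inner elements, hence on all of them by \<open>inner_const\<close>.\<close>
lemma forward_constant: "\<exists>b. \<forall>x y z. x < y \<longrightarrow> y < z \<longrightarrow> forward x y z = b"
proof (cases "\<exists>m\<^sub>0::'a. inner m\<^sub>0")
  case True
  then obtain m\<^sub>0 :: 'a where m\<^sub>0: "inner m\<^sub>0" by blast
  have "forward_at m = forward_at m'" if mm': "inner m" "inner m'" "m < m'" for m m'
  proof -
    obtain c z where cz: "c < m" "m' < z" using mm'(1,2) unfolding inner_def by blast
    have "forward_at m \<longleftrightarrow> forward c m m'" by (rule forward_at_eq[OF cz(1) mm'(3)])
    also have "\<dots> \<longleftrightarrow> forward m m' z"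
      using forward_shift_right[OF cz(1) mm'(3) cz(2)] forward_shift_left[OF cz(1) mm'(3) cz(2)] by blast
    also have "\<dots> \<longleftrightarrow> forward_at m'" by (rule forward_at_eq[OF mm'(3) cz(2), symmetric])
    finally show ?thesis by simp
  qed
  then have "forward x y z = forward_at m\<^sub>0" if "x < y" "y < z" for x y z
    using forward_at_eq[OF that] inner_const[OF single _ inner_between[OF that] m\<^sub>0] by blast
  then show ?thesis by blast
next
  case False
  then show ?thesis by (auto simp: inner_def)
qed

end

text \<open>Fixing the orientation \<open>b\<close>, the endpoint \<open>src x y\<close> plays the role of \<open>x\<close> and \<open>dst x y\<close> that of \<open>y\<close>.\<close>
locale oriented_pair_map = strict_pair_map T wt
  for T :: "'a::{finite,order} \<Rightarrow> 'a \<Rightarrow> 'a \<times> 'a" and wt :: "'a \<Rightarrow> 'a \<Rightarrow> 'k::field" +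
  fixes b :: bool
  assumes orientation: "\<And>x y z. x < y \<Longrightarrow> y < z \<Longrightarrow> forward x y z = b"
begin

definition src :: "'a \<Rightarrow> 'a \<Rightarrow> 'a" where "src x y = (if b then fst (T x y) else snd (T x y))"
definition dst :: "'a \<Rightarrow> 'a \<Rightarrow> 'a" where "dst x y = (if b then snd (T x y) else fst (T x y))"
definition sign :: 'k where "sign = (if b then 1 else -1)"

lemma sign_nonzero: "sign \<noteq> 0"
  by (simp add: sign_def)

lemma src_dst_compose:
  assumes "x < y" "y < z"
  shows "dst x y = src y z" "src x z = src x y" "dst x z = dst y z"
  using forward_compose[OF assms] backward_compose[OF assms] orientation[OF assms]
  by (auto simp: src_def dst_def forward_def)

definition offset :: "'a \<Rightarrow> 'a \<Rightarrow> 'a \<Rightarrow> 'k" where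
  "offset x y = (\<lambda>w. wt w (src x y) - sign * kron x w)"

lemma offset_dst: "x < y \<Longrightarrow> offset x y = (\<lambda>w. wt w (dst x y) - sign * kron y w)"
  unfolding offset_def src_def dst_def sign_def
  using weight_diff[of x y] by (cases b) (auto simp: fun_eq_iff algebra_simps)

lemma offset_compose:
  assumes "x < y" "y < z"
  shows "offset x y = offset y z" "offset x z = offset x y"
  using offset_dst[OF assms(1)] src_dst_compose[OF assms] by (simp_all add: offset_def)

definition offset_at :: "'a \<Rightarrow> 'a \<Rightarrow> 'k" where
  "offset_at m = offset (SOME c. c < m) m"

lemma offset_at_left:
  assumes "inner m" "c < m"
  shows "offset c m = offset_at m"
proof -
  obtain z where z: "m < z" using assms(1) by (auto simp: inner_def)
  have c\<^sub>0: "(SOME c. c < m) < m" using assms(2) by (rule someI)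
  have "offset c m = offset m z" by (rule offset_compose(1)[OF assms(2) z])
  also have "\<dots> = offset_at m" unfolding offset_at_def using offset_compose(1)[OF c\<^sub>0 z] by simp
  finally show ?thesis .
qed

lemma offset_at_right:
  assumes "inner m" "m < z"
  shows "offset m z = offset_at m"
proof -
  obtain c where c: "c < m" using assms(1) by (auto simp: inner_def)
  show ?thesis using offset_at_left[OF assms(1) c] offset_compose(1)[OF c assms(2)] by simp
qed

lemma offset_constant: "\<exists>L. \<forall>x y. x < y \<longrightarrow> offset x y = L"
proof (cases "\<exists>m\<^sub>0::'a. inner m\<^sub>0")
  case True
  then obtain m\<^sub>0 :: 'a where m\<^sub>0: "inner m\<^sub>0" by blast
  have comparable: "offset_at m = offset_at m'" if "inner m" "inner m'" "m < m'" for m m'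
    using offset_at_right[OF that(1,3)] offset_at_left[OF that(2,3)] by simp
  have at_const: "offset_at m = offset_at m\<^sub>0" if "inner m" for m
    using inner_const[OF single comparable that m\<^sub>0] .
  have "offset x y = offset_at m\<^sub>0" if xy: "x < y" for x y
  proof -
    consider "inner x" | "inner y" | r where "x < r" "r < y"
      using strict_pair_near_inner[OF single m\<^sub>0 xy] by blast
    then show ?thesis
    proof cases
      case 1
      then show ?thesis using offset_at_right[OF 1 xy] at_const[OF 1] by simp
    next
      case 2
      then show ?thesis using offset_at_left[OF 2 xy] at_const[OF 2] by simp
    next
      case 3
      then have "inner r" by (rule inner_between)
      then show ?thesis using offset_compose(2)[OF 3] offset_at_left[OF _ 3(1)] at_const by simp
    qed
  qed
  then show ?thesis by blast
next
  case False
  then show ?thesis using strict_pair_unique_without_inner[OF single] by blast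
qed

definition offset_const :: "'a \<Rightarrow> 'k" where
  "offset_const = (SOME L. \<forall>x y. x < y \<longrightarrow> offset x y = L)"

lemma offset_eq_const: "x < y \<Longrightarrow> offset x y = offset_const"
  using someI_ex[OF offset_constant] unfolding offset_const_def by blast

lemma wt_src: "x < y \<Longrightarrow> wt w (src x y) = offset_const w + sign * kron x w"
  using fun_cong[OF offset_eq_const, of x y w] by (simp add: offset_def algebra_simps)

lemma wt_dst: "x < y \<Longrightarrow> wt w (dst x y) = offset_const w + sign * kron y w"
  using fun_cong[OF offset_eq_const, of x y w] by (simp add: offset_dst algebra_simps)

definition relabel :: "'a \<Rightarrow> 'a" where
  "relabel p = (if \<exists>q. p < q then src p (SOME q. p < q) else dst (SOME q. q < p) p)"

lemma wt_relabel:
  assumes "\<exists>q. q < p \<or> p < q"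
  shows "wt w (relabel p) = offset_const w + sign * kron p w"
proof (cases "\<exists>q. p < q")
  case True
  then have "p < (SOME q. p < q)" by (rule someI_ex)
  then show ?thesis using True by (simp add: relabel_def wt_src)
next
  case False
  then have "\<exists>q. q < p" using assms by blast
  then have "(SOME q. q < p) < p" by (rule someI_ex)
  then show ?thesis using False by (simp add: relabel_def wt_dst)
qed

lemma src_eq_relabel:
  assumes "x < y"
  shows "src x y = relabel x"
proof (rule weight_inj)
  fix w
  have "\<exists>q. q < x \<or> x < q" using assms by blast
  then show "wt w (src x y) = wt w (relabel x)" using wt_src[OF assms] wt_relabel by simp
qed

lemma dst_eq_relabel:
  assumes "x < y"
  shows "dst x y = relabel y"
proof (rule weight_inj)
  fix w
  have "\<exists>q. q < y \<or> y < q" using assms by blast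
  then show "wt w (dst x y) = wt w (relabel y)" using wt_dst[OF assms] wt_relabel by simp
qed

lemma relabel_inj: "inj relabel"
proof (rule injI, rule ccontr)
  fix p p' assume eq: "relabel p = relabel p'" and "p \<noteq> p'"
  then have "\<exists>q. q < p \<or> p < q" "\<exists>q. q < p' \<or> p' < q"
    using connected_isolated[OF connected] by metis+
  then have "offset_const p + sign * kron p p = offset_const p + sign * kron p' p"
    using wt_relabel eq by metis
  then show False using \<open>p \<noteq> p'\<close> sign_nonzero by (simp add: kron_def)
qed

end

lemma (in strict_pair_map) induced_by_relabelling:
  "\<exists>\<pi>. inj \<pi> \<and> ((\<forall>x y. x < y \<longrightarrow> T x y = (\<pi> x, \<pi> y)) \<or> (\<forall>x y. x < y \<longrightarrow> T x y = (\<pi> y, \<pi> x)))"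
proof -
  obtain b where "\<And>x y z. x < y \<Longrightarrow> y < z \<Longrightarrow> forward x y z = b" using forward_constant by blast
  then interpret oriented_pair_map T wt b by unfold_locales
  have "(\<forall>x y. x < y \<longrightarrow> T x y = (relabel x, relabel y)) \<or> (\<forall>x y. x < y \<longrightarrow> T x y = (relabel y, relabel x))"
    using src_eq_relabel dst_eq_relabel unfolding src_def dst_def by (cases b) (auto simp: prod_eq_iff)
  then show ?thesis using relabel_inj by blast
qed

section \<open>Twisted relabellings and central traces\<close>

locale twisted_relabelling =
  fixes \<pi> :: "'a::{finite,order} \<Rightarrow> 'a" and \<sigma> :: "'a \<Rightarrow> 'a \<Rightarrow> 'k::field"
  assumes inj: "inj \<pi>"
    and nonzero: "\<And>x y. \<sigma> x y \<noteq> 0"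
    and cocycle: "\<And>x y z. x \<le> y \<Longrightarrow> y \<le> z \<Longrightarrow> \<sigma> x z = \<sigma> x y * \<sigma> y z"
begin

lemma bij: "bij \<pi>"
  using inj finite_UNIV_inj_surj[OF _ inj] by (simp add: bij_def)

lemma inv_eq_iff: "inv \<pi> u = x \<longleftrightarrow> u = \<pi> x"
  using bij_inv_eq_iff[OF bij] by metis

lemma inv_apply [simp]: "inv \<pi> (\<pi> x) = x"
  using inv_f_f[OF inj] .

lemma apply_inv [simp]: "\<pi> (inv \<pi> u) = u"
  using bij_inv_eq_iff[OF bij] by metis

lemma sum_reindex_inv: "(\<Sum>w\<in>UNIV. F (inv \<pi> w)) = (\<Sum>z\<in>UNIV. F z)"
  using bij_imp_bij_inv[OF bij] by (intro sum.reindex_bij_betw) (simp add: bij_def)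

definition twist_hom :: "('a \<Rightarrow> 'a \<Rightarrow> 'k) \<Rightarrow> ('a \<Rightarrow> 'a \<Rightarrow> 'k)" where
  "twist_hom f = (\<lambda>u v. \<sigma> (inv \<pi> u) (inv \<pi> v) * f (inv \<pi> u) (inv \<pi> v))"

definition twist_anti :: "('a \<Rightarrow> 'a \<Rightarrow> 'k) \<Rightarrow> ('a \<Rightarrow> 'a \<Rightarrow> 'k)" where
  "twist_anti f = (\<lambda>u v. \<sigma> (inv \<pi> v) (inv \<pi> u) * f (inv \<pi> v) (inv \<pi> u))"

lemma twist_hom_linear: "inc_linear twist_hom"
  unfolding inc_linear_def twist_hom_def by (simp add: algebra_simps)

lemma twist_anti_linear: "inc_linear twist_anti"
  unfolding inc_linear_def twist_anti_def by (simp add: algebra_simps)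

lemma twist_hom_unit_mat: "twist_hom (unit_mat x y) = smult_mat (\<sigma> x y) (unit_mat (\<pi> x) (\<pi> y))"
  unfolding twist_hom_def smult_mat_def unit_mat_def by (auto simp: inv_eq_iff fun_eq_iff)

lemma twist_anti_unit_mat: "twist_anti (unit_mat x y) = smult_mat (\<sigma> x y) (unit_mat (\<pi> y) (\<pi> x))"
  unfolding twist_anti_def smult_mat_def unit_mat_def by (auto simp: inv_eq_iff fun_eq_iff)

lemma twist_cocycle_sum:
  assumes "f \<in> incidence" "g \<in> incidence"
  shows "(\<Sum>z\<in>UNIV. \<sigma> a z * f a z * (\<sigma> z c * g z c)) = \<sigma> a c * mat_mult f g a c"
  unfolding mat_mult_def sum_distrib_left
proof (rule sum.cong[OF refl])
  fix z
  show "\<sigma> a z * f a z * (\<sigma> z c * g z c) = \<sigma> a c * (f a z * g z c)"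
    using cocycle[of a z c] assms by (cases "a \<le> z \<and> z \<le> c") (auto simp: incidenceD)
qed

end

locale monotone_relabelling = twisted_relabelling +
  assumes mono: "\<And>x y. x \<le> y \<longleftrightarrow> \<pi> x \<le> \<pi> y"
begin

lemma twist_hom_incidence: "f \<in> incidence \<Longrightarrow> twist_hom f \<in> incidence"
  using mono[of "inv \<pi> _" "inv \<pi> _"] inv_eq_iff by (auto simp: incidence_def twist_hom_def)

lemma twist_hom_bij: "bij_betw twist_hom incidence incidence"
proof (rule bij_betw_byWitness[where f' = "\<lambda>h x y. h (\<pi> x) (\<pi> y) / \<sigma> x y"])
  show "(\<lambda>h x y. h (\<pi> x) (\<pi> y) / \<sigma> x y) ` incidence \<subseteq> incidence"
    using mono by (auto simp: incidence_def)
  show "twist_hom ` incidence \<subseteq> incidence" using twist_hom_incidence by blast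
qed (auto simp: twist_hom_def nonzero intro!: ext)

lemma twist_hom_mat_mult:
  assumes "f \<in> incidence" "g \<in> incidence"
  shows "twist_hom (mat_mult f g) = mat_mult (twist_hom f) (twist_hom g)"
proof (intro ext)
  fix u v
  let ?a = "inv \<pi> u" and ?c = "inv \<pi> v"
  have "mat_mult (twist_hom f) (twist_hom g) u v =
      (\<Sum>w\<in>UNIV. \<sigma> ?a (inv \<pi> w) * f ?a (inv \<pi> w) * (\<sigma> (inv \<pi> w) ?c * g (inv \<pi> w) ?c))"
    by (simp add: mat_mult_def twist_hom_def)
  also have "\<dots> = (\<Sum>z\<in>UNIV. \<sigma> ?a z * f ?a z * (\<sigma> z ?c * g z ?c))"
    by (rule sum_reindex_inv)
  also have "\<dots> = twist_hom (mat_mult f g) u v"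
    by (simp add: twist_cocycle_sum[OF assms] twist_hom_def)
  finally show "twist_hom (mat_mult f g) u v = mat_mult (twist_hom f) (twist_hom g) u v" ..
qed

lemma alg_automorphism_twist_hom: "alg_automorphism twist_hom"
  by (simp add: alg_automorphism_def inc_lin_bij_def twist_hom_linear twist_hom_bij inc_mult_eq_mat_mult
      twist_hom_incidence mat_mult_incidence twist_hom_mat_mult)

end

locale antitone_relabelling = twisted_relabelling +
  assumes anti: "\<And>x y. x \<le> y \<longleftrightarrow> \<pi> y \<le> \<pi> x"
begin

lemma twist_anti_incidence: "f \<in> incidence \<Longrightarrow> twist_anti f \<in> incidence"
  using anti[of "inv \<pi> _" "inv \<pi> _"] inv_eq_iff by (auto simp: incidence_def twist_anti_def)

lemma twist_anti_bij: "bij_betw twist_anti incidence incidence"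
proof (rule bij_betw_byWitness[where f' = "\<lambda>h x y. h (\<pi> y) (\<pi> x) / \<sigma> x y"])
  show "(\<lambda>h x y. h (\<pi> y) (\<pi> x) / \<sigma> x y) ` incidence \<subseteq> incidence"
    using anti by (auto simp: incidence_def)
  show "twist_anti ` incidence \<subseteq> incidence" using twist_anti_incidence by blast
qed (auto simp: twist_anti_def nonzero intro!: ext)

lemma twist_anti_mat_mult:
  assumes "f \<in> incidence" "g \<in> incidence"
  shows "twist_anti (mat_mult f g) = mat_mult (twist_anti g) (twist_anti f)"
proof (intro ext)
  fix u v
  let ?a = "inv \<pi> v" and ?c = "inv \<pi> u"
  have "mat_mult (twist_anti g) (twist_anti f) u v =
      (\<Sum>w\<in>UNIV. \<sigma> ?a (inv \<pi> w) * f ?a (inv \<pi> w) * (\<sigma> (inv \<pi> w) ?c * g (inv \<pi> w) ?c))"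
    by (simp add: mat_mult_def twist_anti_def mult_ac)
  also have "\<dots> = (\<Sum>z\<in>UNIV. \<sigma> ?a z * f ?a z * (\<sigma> z ?c * g z ?c))"
    by (rule sum_reindex_inv)
  also have "\<dots> = twist_anti (mat_mult f g) u v"
    by (simp add: twist_cocycle_sum[OF assms] twist_anti_def)
  finally show "twist_anti (mat_mult f g) u v = mat_mult (twist_anti g) (twist_anti f) u v" ..
qed

lemma alg_anti_automorphism_twist_anti: "alg_anti_automorphism twist_anti"
  by (simp add: alg_anti_automorphism_def inc_lin_bij_def twist_anti_linear twist_anti_bij
      inc_mult_eq_mat_mult twist_anti_incidence mat_mult_incidence twist_anti_mat_mult)

end

definition trace_map :: "('a::finite \<Rightarrow> 'k::field) \<Rightarrow> ('a \<Rightarrow> 'a \<Rightarrow> 'k) \<Rightarrow> ('a \<Rightarrow> 'a \<Rightarrow> 'k)" where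
  "trace_map c f = smult_mat (\<Sum>w\<in>UNIV. c w * f w w) kron"

lemma smult_kron_center: "smult_mat c kron \<in> (inc_center :: ('a::{finite,order} \<Rightarrow> 'a \<Rightarrow> 'k::field) set)"
  using smult_mat_incidence[OF kron_incidence]
  by (auto simp: inc_center_def inc_mult_eq_mat_mult mat_mult_smult_left mat_mult_smult_right)

lemma central_trace_trace_map: "central_trace (trace_map (c :: 'a::{finite,order} \<Rightarrow> 'k::field))"
  unfolding central_trace_def
proof (intro conjI)
  show "inc_linear (trace_map c)"
    unfolding inc_linear_def trace_map_def smult_mat_def
    by (simp add: algebra_simps sum.distrib sum_distrib_left)
  show "trace_map c ` incidence \<subseteq> inc_center"
    using smult_kron_center by (auto simp: trace_map_def)
  show "\<forall>f\<in>incidence. \<forall>g\<in>incidence. trace_map c (inc_comm f g) = (\<lambda>x y. 0)"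
    by (auto simp: trace_map_def inc_comm_diag_eq_zero smult_mat_def)
qed

lemma trace_map_unit_mat: "trace_map c (unit_mat x y) = (if x = y then smult_mat (c x) kron else (\<lambda>u v. 0))"
proof -
  have "(\<Sum>w\<in>UNIV. c w * unit_mat x y w w) = (if x = y then c x else 0)"
  proof (cases "x = y")
    case True
    then show ?thesis using sum_mult_kron[of c x] by (simp add: unit_mat_def kron_def)
  next
    case False
    then show ?thesis by (auto simp: unit_mat_def intro!: sum.neutral)
  qed
  then show ?thesis by (simp add: trace_map_def smult_mat_def fun_eq_iff)
qed

lemma strict_cocycle_extend:
  fixes c :: "'a::order \<Rightarrow> 'a \<Rightarrow> 'k::field"
  assumes "s * s = 1" "\<And>x y z. x < y \<Longrightarrow> y < z \<Longrightarrow> c x z = s * (c x y * c y z)"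
    and "x \<le> y" "y \<le> z"
  defines "c' \<equiv> \<lambda>x y. if x < y then s * c x y else 1"
  shows "c' x z = c' x y * c' y z"
proof (cases "x = y \<or> y = z")
  case False
  then have "x < y" "y < z" using assms(3,4) by auto
  moreover have "x < z" using \<open>x < y\<close> \<open>y < z\<close> by simp
  ultimately have "c' x z = (s * s) * (c x y * c y z)" "c' x y * c' y z = (s * s) * (c x y * c y z)"
    using assms(2)[OF \<open>x < y\<close> \<open>y < z\<close>] by (simp_all add: c'_def mult_ac)
  then show ?thesis using assms(1) by simp
qed (auto simp: c'_def)

section \<open>Diagonal-preserving Lie automorphisms are proper\<close>

context diag_preserving
begin

lemma monotone_if_supp_pair_forward:
  assumes "inj \<pi>" "\<And>x y. x < y \<Longrightarrow> supp_pair x y = (\<pi> x, \<pi> y)"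
  shows "x \<le> y \<longleftrightarrow> \<pi> x \<le> \<pi> y"
proof
  assume "x \<le> y"
  then show "\<pi> x \<le> \<pi> y"
    using supp_pair_less[of x y] assms(2)[of x y] by (cases "x = y") (auto simp: order.order_iff_strict)
next
  assume le: "\<pi> x \<le> \<pi> y"
  show "x \<le> y"
  proof (cases "\<pi> x = \<pi> y")
    case True
    then show ?thesis using assms(1) by (simp add: inj_eq)
  next
    case False
    then have "\<pi> x < \<pi> y" using le by simp
    then obtain y' z' where "y' < z'" "supp_pair y' z' = (\<pi> x, \<pi> y)" by (rule supp_pair_surj)
    then show ?thesis using assms by (auto simp: inj_eq)
  qed
qed

lemma antitone_if_supp_pair_backward:
  assumes "inj \<pi>" "\<And>x y. x < y \<Longrightarrow> supp_pair x y = (\<pi> y, \<pi> x)"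
  shows "x \<le> y \<longleftrightarrow> \<pi> y \<le> \<pi> x"
proof
  assume "x \<le> y"
  then show "\<pi> y \<le> \<pi> x"
    using supp_pair_less[of x y] assms(2)[of x y] by (cases "x = y") (auto simp: order.order_iff_strict)
next
  assume le: "\<pi> y \<le> \<pi> x"
  show "x \<le> y"
  proof (cases "\<pi> x = \<pi> y")
    case True
    then show ?thesis using assms(1) by (simp add: inj_eq)
  next
    case False
    then have "\<pi> y < \<pi> x" using le by simp
    then obtain y' z' where "y' < z'" "supp_pair y' z' = (\<pi> y, \<pi> x)" by (rule supp_pair_surj)
    then show ?thesis using assms by (auto simp: inj_eq)
  qed
qed

text \<open>The diagonal part of \<open>\<phi>\<close> is matched by the central trace; the offset \<open>weight w (\<pi> w) - s\<close>
  comes from \<open>connected_affine\<close>.\<close>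
lemma eq_scaled_twist_plus_trace:
  assumes connected: "poset_connected TYPE('a)"
    and "inj \<pi>" "s * s = 1" "inc_linear \<psi>"
    and diag_twist: "\<And>x. \<psi> (unit_mat x x) = unit_mat (\<pi> x) (\<pi> x)"
    and strict_twist: "\<And>x y. x < y \<Longrightarrow> \<phi> (unit_mat x y) = smult_mat s (\<psi> (unit_mat x y))"
    and weights: "\<And>x y w. x < y \<Longrightarrow> weight w (\<pi> x) - weight w (\<pi> y) = s * (kron x w - kron y w)"
    and "f \<in> incidence"
  shows "\<phi> f = (\<lambda>u v. s * \<psi> f u v + trace_map (\<lambda>w. weight w (\<pi> w) - s) f u v)"
proof (rule inc_linear_eqI[OF lie_automorphism_linear[OF lie] _ _ \<open>f \<in> incidence\<close>])
  show "inc_linear (\<lambda>f u v. s * \<psi> f u v + trace_map (\<lambda>w. weight w (\<pi> w) - s) f u v)"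
    using inc_linear_scaled_add[OF assms(4) central_trace_trace_map[unfolded central_trace_def, THEN conjunct1]] .
  have surj: "surj \<pi>" using finite_UNIV_inj_surj[OF _ assms(2)] by simp
  fix x y :: 'a assume "x \<le> y"
  then consider "x = y" | "x < y" by (auto simp: order.order_iff_strict)
  then show "\<phi> (unit_mat x y) = (\<lambda>u v. s * \<psi> (unit_mat x y) u v + trace_map (\<lambda>w. weight w (\<pi> w) - s) (unit_mat x y) u v)"
  proof cases
    case 1
    show ?thesis
    proof (intro ext)
      fix u v
      obtain p where u: "u = \<pi> p" using surj by (metis surjE)
      have "weight x (\<pi> p) = (weight x (\<pi> x) - s) + s * kron p x"
        using weights by (intro connected_affine[OF connected, where h = "\<lambda>p. weight x (\<pi> p)"])
      moreover have "\<pi> p = \<pi> x \<longleftrightarrow> p = x" using assms(2) by (simp add: inj_eq)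
      ultimately show "\<phi> (unit_mat x y) u v =
          s * \<psi> (unit_mat x y) u v + trace_map (\<lambda>w. weight w (\<pi> w) - s) (unit_mat x y) u v"
        using 1 u by (simp add: image_diag_unit_mat diag_twist trace_map_unit_mat smult_mat_def)
          (auto simp: unit_mat_def kron_def)
    qed
  next
    case 2
    then have "x \<noteq> y" by simp
    with 2 show ?thesis by (simp add: strict_twist trace_map_unit_mat smult_mat_def)
  qed
qed

lemma proper_if_supp_pair_forward:
  assumes connected: "poset_connected TYPE('a)"
    and "inj \<pi>" and forward: "\<And>x y. x < y \<Longrightarrow> supp_pair x y = (\<pi> x, \<pi> y)"
  shows "proper_lie_automorphism \<phi>"
proof -
  define \<sigma> where "\<sigma> x y = (if x < y then supp_coeff x y else 1)" for x y
  have compose: "supp_coeff x z = supp_coeff x y * supp_coeff y z" if "x < y" "y < z" for x y z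
  proof -
    have "\<pi> z \<noteq> \<pi> x" using that \<open>inj \<pi>\<close> by (auto simp: inj_eq)
    then show ?thesis using supp_pair_compose[OF that] forward[OF that(1)] forward[OF that(2)] by auto
  qed
  interpret monotone_relabelling \<pi> \<sigma>
  proof unfold_locales
    show "\<sigma> x y \<noteq> 0" for x y using supp_coeff_nonzero by (simp add: \<sigma>_def)
    show "\<sigma> x z = \<sigma> x y * \<sigma> y z" if "x \<le> y" "y \<le> z" for x y z
      unfolding \<sigma>_def by (rule strict_cocycle_extend[of 1 supp_coeff, unfolded mult_1_left, OF refl compose that])
  qed (use \<open>inj \<pi>\<close> monotone_if_supp_pair_forward[OF \<open>inj \<pi>\<close> forward] in auto)
  have "\<forall>f\<in>incidence. \<phi> f = (\<lambda>u v. twist_hom f u v + trace_map (\<lambda>w. weight w (\<pi> w) - 1) f u v)"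
    using eq_scaled_twist_plus_trace[OF connected \<open>inj \<pi>\<close> _ twist_hom_linear, of 1]
      supp_pair_weight forward image_unit_mat
    by (simp add: twist_hom_unit_mat \<sigma>_def smult_mat_def)
  then show ?thesis
    unfolding proper_lie_automorphism_def using alg_automorphism_twist_hom central_trace_trace_map by blast
qed

lemma proper_if_supp_pair_backward:
  assumes connected: "poset_connected TYPE('a)"
    and "inj \<pi>" and backward: "\<And>x y. x < y \<Longrightarrow> supp_pair x y = (\<pi> y, \<pi> x)"
  shows "proper_lie_automorphism \<phi>"
proof -
  define \<sigma> where "\<sigma> x y = (if x < y then - supp_coeff x y else 1)" for x y
  have compose: "supp_coeff x z = - (supp_coeff x y * supp_coeff y z)" if "x < y" "y < z" for x y z
  proof -
    have "\<pi> z \<noteq> \<pi> x" using that \<open>inj \<pi>\<close> by (auto simp: inj_eq)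
    then show ?thesis using supp_pair_compose[OF that] backward[OF that(1)] backward[OF that(2)] by auto
  qed
  interpret antitone_relabelling \<pi> \<sigma>
  proof unfold_locales
    show "\<sigma> x y \<noteq> 0" for x y using supp_coeff_nonzero by (simp add: \<sigma>_def)
    show "\<sigma> x z = \<sigma> x y * \<sigma> y z" if "x \<le> y" "y \<le> z" for x y z
      unfolding \<sigma>_def by (rule strict_cocycle_extend[of "-1" supp_coeff, unfolded mult_minus1, OF _ compose that]) simp
  qed (use \<open>inj \<pi>\<close> antitone_if_supp_pair_backward[OF \<open>inj \<pi>\<close> backward] in auto)
  have "\<forall>f\<in>incidence. \<phi> f = (\<lambda>u v. - twist_anti f u v + trace_map (\<lambda>w. weight w (\<pi> w) + 1) f u v)"
    using eq_scaled_twist_plus_trace[OF connected \<open>inj \<pi>\<close> _ twist_anti_linear, of "-1"]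
      supp_pair_weight backward image_unit_mat
    by (simp add: twist_anti_unit_mat \<sigma>_def smult_mat_def algebra_simps)
  then show ?thesis
    unfolding proper_lie_automorphism_def using alg_anti_automorphism_twist_anti central_trace_trace_map by blast
qed

lemma proper:
  assumes connected: "poset_connected TYPE('a)"
    and single: "\<forall>C D :: 'a set. max_chain C \<and> max_chain D \<longrightarrow> chain_equiv C D"
  shows "proper_lie_automorphism \<phi>"
proof -
  interpret strict_pair_map supp_pair weight
    using connected single supp_pair_less supp_pair_compose supp_pair_disjoint supp_pair_weight weight_inj
    by unfold_locales blast+
  obtain \<pi> where "inj \<pi>"
    "(\<forall>x y. x < y \<longrightarrow> supp_pair x y = (\<pi> x, \<pi> y)) \<or> (\<forall>x y. x < y \<longrightarrow> supp_pair x y = (\<pi> y, \<pi> x))"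
    using induced_by_relabelling by blast
  then show ?thesis using proper_if_supp_pair_forward[OF connected] proper_if_supp_pair_backward[OF connected] by blast
qed

end

theorem corollary3p12:
  fixes \<Phi> :: "('a::{finite,order} \<Rightarrow> 'a \<Rightarrow> 'k::field) \<Rightarrow> ('a \<Rightarrow> 'a \<Rightarrow> 'k)"
  assumes "poset_connected TYPE('a)"
    and "\<forall>C D :: 'a set. max_chain C \<and> max_chain D \<longrightarrow> chain_equiv C D"
    and "lie_automorphism \<Phi>"
  shows "proper_lie_automorphism \<Phi>"
proof -
  obtain g h where pair: "inverse_pair g h" and diag: "\<And>x. sandwich g h (\<Phi> (unit_mat x x)) \<in> diag_mats"
    using lie_automorphism_conj_diagonal[OF assms(3)] by blast
  interpret inverse_pair g h by (rule pair)
  have "diag_preserving (\<lambda>f. sandwich g h (\<Phi> f))"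
    using lie_automorphism_sandwich[OF assms(3)] diag by unfold_locales
  then have "proper_lie_automorphism (\<lambda>f. sandwich g h (\<Phi> f))"
    using diag_preserving.proper assms(1,2) by blast
  then have "proper_lie_automorphism (\<lambda>f. sandwich h g (sandwich g h (\<Phi> f)))"
    by (rule inverse_pair.proper_lie_automorphism_sandwich[OF swap])
  then show ?thesis by (simp add: sandwich_sandwich)
qed

end
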